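(* Let $\{\mathbb P_\theta\}$ satisfy the regularity assumption (R) at $\theta_1$, let $h\in\mathbb R^k$, and let $\mathcal G$ be a directed graph functional on $\mathbb R^d$ such that $(\mathcal G,\mathbb P_{\theta_1})$ satisfies the covariance condition (C) with limit functions $\lambda^\uparrow,\lambda^\downarrow$. Then under the bootstrap distribution, $$\mathrm{Cov}(\mathcal R(\mathcal G(\mathcal Z_N)),\dot L_N\mid\mathcal F)\to\sigma_{12}:=\frac r2\Big(p\int\langle h,\nabla f(z|\theta_1)\rangle\lambda^\downarrow(z)dz-q\int\langle h,\nabla f(z|\theta_1)\rangle\lambda^\uparrow(z)dz\Big)$$ in probability.
   Context: Family $\{\mathbb P_\theta\}_{\theta\in\Theta\subseteq\mathbb R^k}$ on $\mathbb R^d$ with densities $f(\cdot|\theta)$, score $\eta=\nabla_\theta f/f$. (R): quadratic mean differentiability at $\theta_1$ and $\mathbb E|\langle h,\eta(V,\theta_1)\rangle|^4<\infty$ for $V\sim\mathbb P_{\theta_1}$. Directed graph functional: assigns to each finite $S\subset\mathbb R^d$ a directed graph on $S$ (no loops, no repeated same-direction edges). $d^\uparrow(x,\mathcal G(S)),d^\downarrow(x,\mathcal G(S))$: out/in-degree of $x$ in $\mathcal G(S\cup\{x\})$; $\lambda^\uparrow(x,\mathcal G(S))=Nd^\uparrow(x,\mathcal G(S^x))/|E(\mathcal G(S^x))|$, similarly $\lambda^\downarrow$, with $S^x=S\cup\{x\}$. (C): for $\mathcal V_N$ i.i.d. $\mathbb P_{\theta_1}$, $\lambda^\uparrow(z)=\lim_N\mathbb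 E\lambda^\uparrow(z,\mathcal G(\mathcal V_N))$, $\lambda^\downarrow(z)=\lim_N\mathbb E\lambda^\downarrow(z,\mathcal G(\mathcal V_N))$ for a.e. $z$ (zero otherwise), and $\frac1N\sum_i\langle h,\eta(V_i,\theta_1)\rangle\lambda^{\uparrow}(V_i,\mathcal G(\mathcal V_N))\to\int\langle h,\nabla f(z|\theta_1)\rangle\lambda^\uparrow(z)dz$ in probability, likewise for $\downarrow$. Bootstrap distribution: $Z_1,Z_2,\dots$ i.i.d. $\mathbb P_{\theta_1}$, $\mathcal F=\sigma(Z_i)$, $\mathcal Z_N=\{Z_1..Z_N\}$; independent labels $c_i\in\{1,2\}$, $\mathbb P(c_i=1)=N_1/N$, independent of $\mathcal F$; $N=N_1+N_2$, $N_1/N\to p\in(0,1)$, $q=1-p$, $r=2pq$. $T=\sum_{i\ne j}\mathbf 1\{c_i=1,c_j=2\}\mathbf 1\{(Z_i,Z_j)\in E(\mathcal G(\mathcal Z_N))\}/|E(\mathcal G(\mathcal Z_N))|$, $\mathcal R(\mathcal G(\mathcal Z_N))=\sqrt N\{T-\frac{N_1N_2}{N(N-1)}\}$, $\dot L_N=N^{-1/2}\sum_{i=1}^N\langle h,\eta(Z_i,\theta_1)\rangle\mathbf 1\{c_i=2\}$. *)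

theory Defs
  imports "HOL-Probability.Probability"
begin

definition qmd ::
  "'k::euclidean_space set \<Rightarrow> ('k \<Rightarrow> 'd::euclidean_space \<Rightarrow> real) \<Rightarrow> 'k \<Rightarrow> ('d \<Rightarrow> 'k) \<Rightarrow> bool" where
  "qmd \<Theta> f \<theta>1 \<eta> \<longleftrightarrow>
     (\<forall>e>0. eventually (\<lambda>\<theta>.
        (\<integral>\<^sup>+ z. ennreal ((sqrt (f \<theta> z) - sqrt (f \<theta>1 z)
                    - (1/2) * ((\<theta> - \<theta>1) \<bullet> \<eta> z) * sqrt (f \<theta>1 z))\<^sup>2) \<partial>lborel)
        \<le> ennreal (e * (norm (\<theta> - \<theta>1))\<^sup>2)) (at \<theta>1 within \<Theta>))"

text \<open>The score eta = grad_theta f / f (set to 0 where f = 0).\<close>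
definition score :: "('k::euclidean_space \<Rightarrow> 'd::euclidean_space \<Rightarrow> real) \<Rightarrow> 'k \<Rightarrow> ('d \<Rightarrow> 'k) \<Rightarrow> 'd \<Rightarrow> 'k" where
  "score f \<theta>1 gradf z = (1 / f \<theta>1 z) *\<^sub>R gradf z"

text \<open>A directed graph functional assigns to every finite S a set of directed edges on S
  without loops (edge sets exclude repeated same-direction edges automatically).\<close>
definition dir_graph_functional :: "('d set \<Rightarrow> ('d \<times> 'd) set) \<Rightarrow> bool" where
  "dir_graph_functional G \<longleftrightarrow>
     (\<forall>S. finite S \<longrightarrow> G S \<subseteq> S \<times> S \<and> (\<forall>x. (x, x) \<notin> G S))"

text \<open>Implicit measurability of the graph functional: the event that (v_i, v_j) is an edge of
  the graph built on the sample v_0, ..., v_(N-1) is measurable.\<close>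
definition graph_measurable :: "('d::topological_space set \<Rightarrow> ('d \<times> 'd) set) \<Rightarrow> bool" where
  "graph_measurable G \<longleftrightarrow>
     (\<forall>N i j. i < N \<longrightarrow> j < N \<longrightarrow>
        {v \<in> space (PiM {..<N} (\<lambda>_::nat. borel)). (v i, v j) \<in> G (v ` {..<N})}
          \<in> sets (PiM {..<N} (\<lambda>_::nat. borel)))"

definition out_deg :: "('d set \<Rightarrow> ('d \<times> 'd) set) \<Rightarrow> 'd set \<Rightarrow> 'd \<Rightarrow> nat" where
  "out_deg G S x = card {y. (x, y) \<in> G (insert x S)}"

definition in_deg :: "('d set \<Rightarrow> ('d \<times> 'd) set) \<Rightarrow> 'd set \<Rightarrow> 'd \<Rightarrow> nat" where
  "in_deg G S x = card {y. (y, x) \<in> G (insert x S)}"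

definition lam_up :: "('d set \<Rightarrow> ('d \<times> 'd) set) \<Rightarrow> nat \<Rightarrow> 'd set \<Rightarrow> 'd \<Rightarrow> real" where
  "lam_up G N S x = real N * real (out_deg G S x) / real (card (G (insert x S)))"

definition lam_dn :: "('d set \<Rightarrow> ('d \<times> 'd) set) \<Rightarrow> nat \<Rightarrow> 'd set \<Rightarrow> 'd \<Rightarrow> real" where
  "lam_dn G N S x = real N * real (in_deg G S x) / real (card (G (insert x S)))"

definition sample_law :: "'d measure \<Rightarrow> nat \<Rightarrow> (nat \<Rightarrow> 'd) measure" where
  "sample_law P N = PiM {..<N} (\<lambda>_. P)"

definition lim0 :: "(nat \<Rightarrow> real) \<Rightarrow> real" where
  "lim0 X = (if convergent X then lim X else 0)"

definition E_lam_up :: "('d set \<Rightarrow> ('d \<times> 'd) set) \<Rightarrow> 'd measure \<Rightarrow> nat \<Rightarrow> 'd \<Rightarrow> real" where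
  "E_lam_up G P N z = (\<integral> v. lam_up G N (v ` {..<N}) z \<partial>sample_law P N)"

definition E_lam_dn :: "('d set \<Rightarrow> ('d \<times> 'd) set) \<Rightarrow> 'd measure \<Rightarrow> nat \<Rightarrow> 'd \<Rightarrow> real" where
  "E_lam_dn G P N z = (\<integral> v. lam_dn G N (v ` {..<N}) z \<partial>sample_law P N)"

text \<open>Limit functions lambda-up, lambda-down (zero where the limit does not exist).\<close>
definition lam_up_lim :: "('d set \<Rightarrow> ('d \<times> 'd) set) \<Rightarrow> 'd measure \<Rightarrow> 'd \<Rightarrow> real" where
  "lam_up_lim G P z = lim0 (\<lambda>N. E_lam_up G P N z)"

definition lam_dn_lim :: "('d set \<Rightarrow> ('d \<times> 'd) set) \<Rightarrow> 'd measure \<Rightarrow> 'd \<Rightarrow> real" where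
  "lam_dn_lim G P z = lim0 (\<lambda>N. E_lam_dn G P N z)"

definition conv_in_prob :: "(nat \<Rightarrow> 'a measure) \<Rightarrow> (nat \<Rightarrow> 'a \<Rightarrow> real) \<Rightarrow> real \<Rightarrow> bool" where
  "conv_in_prob Ms X c \<longleftrightarrow>
     (\<forall>e>0. (\<lambda>N. measure (Ms N) {x \<in> space (Ms N). e < \<bar>X N x - c\<bar>}) \<longlonglongrightarrow> 0)"

text \<open>Condition (C) for the pair (G, P) with P = P_theta1 having density f1, score component
  s z = <h, eta(z,theta1)> and gradient component g z = <h, grad f(z|theta1)>.\<close>
definition cond_C ::
  "('d::euclidean_space set \<Rightarrow> ('d \<times> 'd) set) \<Rightarrow> 'd measure \<Rightarrow> ('d \<Rightarrow> real) \<Rightarrow> ('d \<Rightarrow> real) \<Rightarrow> bool" where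
  "cond_C G P s g \<longleftrightarrow>
     (AE z in lborel. convergent (\<lambda>N. E_lam_up G P N z)) \<and>
     (AE z in lborel. convergent (\<lambda>N. E_lam_dn G P N z)) \<and>
     conv_in_prob (sample_law P)
       (\<lambda>N v. (1 / real N) * (\<Sum>i<N. s (v i) * lam_up G N (v ` {..<N}) (v i)))
       (\<integral> z. g z * lam_up_lim G P z \<partial>lborel) \<and>
     conv_in_prob (sample_law P)
       (\<lambda>N v. (1 / real N) * (\<Sum>i<N. s (v i) * lam_dn G N (v ` {..<N}) (v i)))
       (\<integral> z. g z * lam_dn_lim G P z \<partial>lborel)"

definition cond_cov :: "'a measure \<Rightarrow> 'a measure \<Rightarrow> ('a \<Rightarrow> real) \<Rightarrow> ('a \<Rightarrow> real) \<Rightarrow> 'a \<Rightarrow> real" where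
  "cond_cov M F X Y = real_cond_exp M F
     (\<lambda>\<omega>. (X \<omega> - real_cond_exp M F X \<omega>) * (Y \<omega> - real_cond_exp M F Y \<omega>))"

text \<open>Labels: c N i w = True means c_i = 1 at stage N, False means c_i = 2. Indices 0..N-1.\<close>
definition boot_T :: "('d set \<Rightarrow> ('d \<times> 'd) set) \<Rightarrow> (nat \<Rightarrow> 'w \<Rightarrow> 'd) \<Rightarrow> (nat \<Rightarrow> nat \<Rightarrow> 'w \<Rightarrow> bool)
    \<Rightarrow> nat \<Rightarrow> 'w \<Rightarrow> real" where
  "boot_T G Z c N \<omega> =
     (\<Sum>i<N. \<Sum>j<N. if i \<noteq> j \<and> c N i \<omega> \<and> \<not> c N j \<omega> \<and>
          (Z i \<omega>, Z j \<omega>) \<in> G ((\<lambda>k. Z k \<omega>) ` {..<N}) then 1 else 0)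
     / real (card (G ((\<lambda>k. Z k \<omega>) ` {..<N})))"

definition boot_R :: "('d set \<Rightarrow> ('d \<times> 'd) set) \<Rightarrow> (nat \<Rightarrow> 'w \<Rightarrow> 'd) \<Rightarrow> (nat \<Rightarrow> nat \<Rightarrow> 'w \<Rightarrow> bool)
    \<Rightarrow> (nat \<Rightarrow> nat) \<Rightarrow> nat \<Rightarrow> 'w \<Rightarrow> real" where
  "boot_R G Z c N1 N \<omega> = sqrt (real N) *
     (boot_T G Z c N \<omega> - real (N1 N) * real (N - N1 N) / (real N * (real N - 1)))"

definition boot_L :: "('d \<Rightarrow> real) \<Rightarrow> (nat \<Rightarrow> 'w \<Rightarrow> 'd) \<Rightarrow> (nat \<Rightarrow> nat \<Rightarrow> 'w \<Rightarrow> bool) \<Rightarrow> nat \<Rightarrow> 'w \<Rightarrow> real" where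
  "boot_L s Z c N \<omega> = (1 / sqrt (real N)) * (\<Sum>i<N. s (Z i \<omega>) * (if c N i \<omega> then 0 else 1))"

end

theory Submission
  imports Defs
begin

text \<open>Given the pooled sample Z, the only randomness left is in the labels, which are independent
  of Z. R is an affine function of the cross-edge indicators 1{c_i = 1, c_j = 2} and L a linear
  function of the indicators 1{c_k = 2}, with coefficients determined by Z, so their conditional
  covariance is an explicit quadratic form. The cross-edge event of (i, j) is independent of
  {c_k = 2} unless k = i, where the two are disjoint, or k = j, where the first implies the second;
  with \<pi> = N1/N this yields \<pi>^2(1 - \<pi>) times the average of the score weighted by normalised
  in-degrees minus \<pi>(1 - \<pi>)^2 times the one weighted by out-degrees. As P has a density, the sample
  has no ties almost surely, so these averages are those of condition (C). They converge in
  probability, and \<pi>^2(1 - \<pi>) \<rightarrow> (r/2) p, \<pi>(1 - \<pi>)^2 \<rightarrow> (r/2) q.\<close>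

section \<open>Conditional expectations against independent events\<close>

lemma integrable_bounded_factor:
  fixes a f :: "'a \<Rightarrow> real"
  assumes f: "integrable M f" and a: "a \<in> borel_measurable M" and bound: "\<And>x. \<bar>a x\<bar> \<le> c"
  shows "integrable M (\<lambda>x. a x * f x)"
proof (rule Bochner_Integration.integrable_bound)
  show "integrable M (\<lambda>x. c * f x)" using f by simp
  show "(\<lambda>x. a x * f x) \<in> borel_measurable M" using a f by simp
  show "AE x in M. norm (a x * f x) \<le> norm (c * f x)"
  proof (rule AE_I2)
    fix x
    have "0 \<le> c" using bound[of x] by linarith
    then show "norm (a x * f x) \<le> norm (c * f x)"
      using bound[of x] by (simp add: abs_mult mult_right_mono)
  qed
qed

lemma integrable_mult_centered_indicator:
  fixes g :: "'a \<Rightarrow> real"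
  assumes g: "integrable M g" and D: "D \<in> sets M"
  shows "integrable M (\<lambda>x. g x * (indicator D x - \<gamma>))"
proof -
  have "(\<lambda>x. g x * (indicator D x - \<gamma>)) = (\<lambda>x. g x * indicator D x - \<gamma> * g x)"
    by (auto simp: algebra_simps)
  then show ?thesis
    using integrable_mult_indicator[OF D g] g by (simp add: mult.commute)
qed

context prob_space
begin

lemma real_cond_exp_mult_indep_indicator:
  assumes subalg: "subalgebra M F" and B: "B \<in> events"
    and indep: "\<And>A. A \<in> sets F \<Longrightarrow> prob (A \<inter> B) = prob A * prob B"
    and gF: "g \<in> borel_measurable F" and g: "integrable M g"
  shows "AE x in M. real_cond_exp M F (\<lambda>x. g x * indicator B x) x = g x * prob B"
proof -
  interpret finite_measure_subalgebra M F
    by unfold_locales (rule subalg)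
  have "AE x in M. real_cond_exp M F (\<lambda>x. g x * indicator B x) x
      = g x * real_cond_exp M F (indicator B) x"
    using B g gF integrable_mult_indicator[OF B g]
    by (intro real_cond_exp_mult) (auto simp: mult.commute)
  moreover have "AE x in M. real_cond_exp M F (indicator B) x = prob B"
  proof (rule real_cond_exp_charact)
    fix A assume A: "A \<in> sets F"
    then have "A \<in> events" using subalg by (meson subalgebra_def subsetD)
    then show "(\<integral>x\<in>A. indicator B x \<partial>M) = (\<integral>x\<in>A. prob B \<partial>M)"
      using indep[OF A] B sets.sets_into_space[OF B]
      by (simp add: set_lebesgue_integral_def indicator_inter_arith[symmetric] Int_absorb2)
  qed (use B in \<open>auto intro!: integrable_real_indicator simp: emeasure_eq_measure\<close>)
  ultimately show ?thesis by auto
qed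

lemma real_cond_exp_mult_centered_indicator:
  assumes subalg: "subalgebra M F" and E: "E \<in> events"
    and indep: "\<And>A. A \<in> sets F \<Longrightarrow> prob (A \<inter> E) = prob A * prob E"
    and gF: "g \<in> borel_measurable F" and g: "integrable M g"
  shows "AE x in M. real_cond_exp M F (\<lambda>x. g x * (indicator E x - \<alpha>)) x = g x * (prob E - \<alpha>)"
proof -
  interpret finite_measure_subalgebra M F
    by unfold_locales (rule subalg)
  have "AE x in M. real_cond_exp M F (\<lambda>x. g x * indicator E x + (- \<alpha> * g x)) x
      = real_cond_exp M F (\<lambda>x. g x * indicator E x) x + real_cond_exp M F (\<lambda>x. - \<alpha> * g x) x"
    using g integrable_mult_indicator[OF E g] by (intro real_cond_exp_add) (auto simp: mult.commute)
  moreover have "AE x in M. real_cond_exp M F (\<lambda>x. - \<alpha> * g x) x = - \<alpha> * g x"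
    using g gF by (intro real_cond_exp_F_meas) auto
  moreover have "AE x in M. real_cond_exp M F (\<lambda>x. g x * indicator E x) x = g x * prob E"
    using indep by (intro real_cond_exp_mult_indep_indicator subalg E gF g)
  ultimately show ?thesis by eventually_elim (simp add: algebra_simps)
qed

lemma real_cond_exp_mult_centered_indicators:
  assumes subalg: "subalgebra M F"
    and events: "E \<in> events" "E' \<in> events" "E \<inter> E' \<in> events"
    and indep: "\<And>A D. A \<in> sets F \<Longrightarrow> D \<in> {E, E', E \<inter> E'} \<Longrightarrow> prob (A \<inter> D) = prob A * prob D"
    and gF: "g \<in> borel_measurable F" and g: "integrable M g"
  shows "AE x in M. real_cond_exp M F (\<lambda>x. g x * ((indicator E x - \<alpha>) * (indicator E' x - \<beta>))) x
           = g x * (prob (E \<inter> E') - \<beta> * prob E - \<alpha> * prob E' + \<alpha> * \<beta>)"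
proof -
  interpret finite_measure_subalgebra M F
    by unfold_locales (rule subalg)
  define f0 where "f0 x = g x * (indicator (E \<inter> E') x - \<alpha> * \<beta>)" for x
  define f1 where "f1 x = - \<beta> * g x * (indicator E x - \<alpha>)" for x
  define f2 where "f2 x = - \<alpha> * g x * (indicator E' x - \<beta>)" for x
  have split: "(\<lambda>x. g x * ((indicator E x - \<alpha>) * (indicator E' x - \<beta>))) = (\<lambda>x. f0 x + (f1 x + f2 x))"
    by (simp add: f0_def f1_def f2_def indicator_inter_arith algebra_simps)
  have centered_int: "integrable M (\<lambda>x. c * g x * (indicator D x - \<gamma>))" if "D \<in> events" for c D \<gamma>
    using integrable_mult_centered_indicator[of M "\<lambda>x. c * g x", OF _ that] g by simp
  have int: "integrable M f0" "integrable M f1" "integrable M f2"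
    using centered_int[of "E \<inter> E'" 1] centered_int[of E "- \<beta>"] centered_int[of E' "- \<alpha>"] events
    by (simp_all add: f0_def[abs_def] f1_def[abs_def] f2_def[abs_def])
  have "AE x in M. real_cond_exp M F (\<lambda>x. f0 x + (f1 x + f2 x)) x
      = real_cond_exp M F f0 x + real_cond_exp M F (\<lambda>x. f1 x + f2 x) x"
    using int by (intro real_cond_exp_add) auto
  moreover have "AE x in M. real_cond_exp M F (\<lambda>x. f1 x + f2 x) x
      = real_cond_exp M F f1 x + real_cond_exp M F f2 x"
    using int by (intro real_cond_exp_add) auto
  moreover have "AE x in M. real_cond_exp M F f0 x = g x * (prob (E \<inter> E') - \<alpha> * \<beta>)"
    unfolding f0_def using indep by (intro real_cond_exp_mult_centered_indicator subalg events gF g) auto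
  moreover have "AE x in M. real_cond_exp M F f1 x = - \<beta> * g x * (prob E - \<alpha>)"
    unfolding f1_def using indep gF g
    by (intro real_cond_exp_mult_centered_indicator subalg events) auto
  moreover have "AE x in M. real_cond_exp M F f2 x = - \<alpha> * g x * (prob E' - \<beta>)"
    unfolding f2_def using indep gF g
    by (intro real_cond_exp_mult_centered_indicator subalg events) auto
  ultimately show ?thesis
    unfolding split by eventually_elim (simp add: algebra_simps)
qed

lemma real_cond_exp_sum_AE:
  assumes subalg: "subalgebra M F" and I: "finite I"
    and f: "\<And>t. t \<in> I \<Longrightarrow> integrable M (f t)"
    and cexp: "\<And>t. t \<in> I \<Longrightarrow> AE x in M. real_cond_exp M F (f t) x = \<phi> t x"
  shows "AE x in M. real_cond_exp M F (\<lambda>x. \<Sum>t\<in>I. f t x) x = (\<Sum>t\<in>I. \<phi> t x)"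
proof -
  interpret finite_measure_subalgebra M F
    by unfold_locales (rule subalg)
  define f' where "f' t = (if t \<in> I then f t else (\<lambda>_. 0))" for t
  have "AE x in M. real_cond_exp M F (\<lambda>x. \<Sum>t\<in>I. f' t x) x = (\<Sum>t\<in>I. real_cond_exp M F (f' t) x)"
    using f by (intro real_cond_exp_sum) (simp add: f'_def)
  moreover have "AE x in M. \<forall>t\<in>I. real_cond_exp M F (f t) x = \<phi> t x"
    using I cexp by (rule AE_finite_allI)
  ultimately show ?thesis by eventually_elim (simp add: f'_def)
qed

lemma real_cond_exp_eq_offset:
  assumes subalg: "subalgebra M F" and X: "X \<in> borel_measurable M"
    and split: "AE x in M. X x = X0 x + c * Xc x"
    and X0F: "X0 \<in> borel_measurable F" and X0: "integrable M X0" and Xc: "integrable M Xc"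
    and Xc_cexp: "AE x in M. real_cond_exp M F Xc x = 0"
  shows "AE x in M. real_cond_exp M F X x = X0 x"
proof -
  interpret finite_measure_subalgebra M F
    by unfold_locales (rule subalg)
  have "AE x in M. real_cond_exp M F X x = real_cond_exp M F (\<lambda>x. X0 x + c * Xc x) x"
    using split X X0 Xc by (intro real_cond_exp_cong) auto
  moreover have "AE x in M. real_cond_exp M F (\<lambda>x. X0 x + c * Xc x) x
      = real_cond_exp M F X0 x + real_cond_exp M F (\<lambda>x. c * Xc x) x"
    using X0 Xc by (intro real_cond_exp_add) auto
  moreover have "AE x in M. real_cond_exp M F X0 x = X0 x"
    using X0 X0F by (rule real_cond_exp_F_meas)
  moreover have "AE x in M. real_cond_exp M F (\<lambda>x. c * Xc x) x = c * real_cond_exp M F Xc x"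
    using Xc by (rule real_cond_exp_cmult)
  ultimately show ?thesis using Xc_cexp by eventually_elim simp
qed

end

text \<open>In the application B i j is the event that edge (i, j) runs from the first to the second
  sample and C k the event that point k belongs to the second sample; the weights a and s are
  functions of the pooled sample, which generates F.\<close>
locale edge_label_model = prob_space +
  fixes F :: "'a measure" and \<E> :: "'a set set" and N :: nat
    and a :: "nat \<Rightarrow> nat \<Rightarrow> 'a \<Rightarrow> real" and s :: "nat \<Rightarrow> 'a \<Rightarrow> real"
    and B :: "nat \<Rightarrow> nat \<Rightarrow> 'a set" and C :: "nat \<Rightarrow> 'a set" and \<alpha> \<beta> :: real
  assumes subalg: "subalgebra M F" and \<E>: "\<E> \<subseteq> events"
    and indep: "\<And>A E. A \<in> sets F \<Longrightarrow> E \<in> \<E> \<Longrightarrow> prob (A \<inter> E) = prob A * prob E"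
    and BC: "\<And>i j k. i < N \<Longrightarrow> j < N \<Longrightarrow> k < N \<Longrightarrow> B i j \<in> \<E> \<and> C k \<in> \<E> \<and> B i j \<inter> C k \<in> \<E>"
    and prob_B: "\<And>i j. i < N \<Longrightarrow> j < N \<Longrightarrow> i \<noteq> j \<Longrightarrow> prob (B i j) = \<alpha>"
    and prob_C: "\<And>k. k < N \<Longrightarrow> prob (C k) = \<beta>"
    and aF: "\<And>i j. a i j \<in> borel_measurable F" and a_bound: "\<And>i j x. \<bar>a i j x\<bar> \<le> 1"
    and a_diag: "\<And>i x. a i i x = 0"
    and sF: "\<And>k. s k \<in> borel_measurable F" and s: "\<And>k. integrable M (s k)"
begin

lemma indicator_events:
  "i < N \<Longrightarrow> j < N \<Longrightarrow> k < N \<Longrightarrow> B i j \<in> events \<and> C k \<in> events \<and> B i j \<inter> C k \<in> events"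
  using BC \<E> by blast

lemma a_measurable: "a i j \<in> borel_measurable M"
  using aF measurable_from_subalg[OF subalg] by blast

lemma s_measurable: "s k \<in> borel_measurable M"
  using sF measurable_from_subalg[OF subalg] by blast

lemma integrable_a: "integrable M (a i j)"
  using integrable_bounded_factor[OF integrable_const[of 1] a_measurable a_bound] by simp

lemma integrable_a_s: "integrable M (\<lambda>x. a i j x * s k x)"
  by (rule integrable_bounded_factor[OF s a_measurable a_bound])

lemma real_cond_exp_edge_sum_centered:
  "AE x in M. real_cond_exp M F (\<lambda>x. \<Sum>i<N. \<Sum>j<N. a i j x * (indicator (B i j) x - \<alpha>)) x = 0"
proof -
  have ae: "AE x in M. real_cond_exp M F (\<lambda>x. \<Sum>i<N. \<Sum>j<N. a i j x * (indicator (B i j) x - \<alpha>)) x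
      = (\<Sum>i<N. \<Sum>j<N. a i j x * (prob (B i j) - \<alpha>))"
    using indicator_events integrable_a aF indep BC
    by (intro real_cond_exp_sum_AE subalg finite_lessThan Bochner_Integration.integrable_sum
        integrable_mult_centered_indicator real_cond_exp_mult_centered_indicator) auto
  have zero: "(\<Sum>i<N. \<Sum>j<N. a i j x * (prob (B i j) - \<alpha>)) = 0" for x
  proof (intro sum.neutral ballI)
    fix i j assume "i \<in> {..<N}" "j \<in> {..<N}"
    then show "a i j x * (prob (B i j) - \<alpha>) = 0"
      using a_diag prob_B by (cases "i = j") auto
  qed
  from ae show ?thesis by eventually_elim (simp only: zero)
qed

lemma real_cond_exp_label_sum_centered:
  "AE x in M. real_cond_exp M F (\<lambda>x. \<Sum>k<N. s k x * (indicator (C k) x - \<beta>)) x = 0"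
proof -
  have "AE x in M. real_cond_exp M F (\<lambda>x. \<Sum>k<N. s k x * (indicator (C k) x - \<beta>)) x
      = (\<Sum>k<N. s k x * (prob (C k) - \<beta>))"
    using indicator_events s sF indep BC
    by (intro real_cond_exp_sum_AE subalg finite_lessThan
        integrable_mult_centered_indicator real_cond_exp_mult_centered_indicator) auto
  then show ?thesis by eventually_elim (simp add: prob_C)
qed

lemma real_cond_exp_edge_label_products:
  "AE x in M. real_cond_exp M F (\<lambda>x. \<Sum>i<N. \<Sum>j<N. \<Sum>k<N.
       a i j x * s k x * ((indicator (B i j) x - \<alpha>) * (indicator (C k) x - \<beta>))) x
     = (\<Sum>i<N. \<Sum>j<N. \<Sum>k<N. a i j x * s k x * (prob (B i j \<inter> C k) - \<alpha> * \<beta>))"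
proof -
  define T where "T i j k x = a i j x * s k x * ((indicator (B i j) x - \<alpha>) * (indicator (C k) x - \<beta>))"
    for i j k x
  have T_int: "integrable M (T i j k)" if "i < N" "j < N" "k < N" for i j k
  proof -
    have centered_le: "\<bar>indicator E x - \<gamma>\<bar> \<le> 1 + \<bar>\<gamma>\<bar>" for E x and \<gamma> :: real
      by (auto simp: indicator_def)
    have bound: "\<bar>(indicator (B i j) x - \<alpha>) * (indicator (C k) x - \<beta>)\<bar> \<le> (1 + \<bar>\<alpha>\<bar>) * (1 + \<bar>\<beta>\<bar>)"
      for x unfolding abs_mult by (intro mult_mono centered_le) auto
    have "(\<lambda>x. (indicator (B i j) x - \<alpha>) * (indicator (C k) x - \<beta>)) \<in> borel_measurable M"
      using indicator_events[OF that] by (intro borel_measurable_times borel_measurable_diff) auto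
    from integrable_bounded_factor[OF integrable_a_s this bound] show ?thesis
      unfolding T_def[abs_def] by (simp add: mult.commute)
  qed
  have cexp_T: "AE x in M. real_cond_exp M F (T i j k) x = a i j x * s k x
      * (prob (B i j \<inter> C k) - \<beta> * prob (B i j) - \<alpha> * prob (C k) + \<alpha> * \<beta>)"
    if "i < N" "j < N" "k < N" for i j k
  proof -
    have "(\<lambda>x. a i j x * s k x) \<in> borel_measurable F"
      using aF sF by measurable
    then show ?thesis
      unfolding T_def[abs_def] using indicator_events[OF that] BC[OF that] integrable_a_s
      by (intro real_cond_exp_mult_centered_indicators subalg) (auto intro: indep)
  qed
  have "AE x in M. real_cond_exp M F (\<lambda>x. \<Sum>i<N. \<Sum>j<N. \<Sum>k<N. T i j k x) x
      = (\<Sum>i<N. \<Sum>j<N. \<Sum>k<N. a i j x * s k x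
          * (prob (B i j \<inter> C k) - \<beta> * prob (B i j) - \<alpha> * prob (C k) + \<alpha> * \<beta>))"
    using T_int cexp_T
    by (intro real_cond_exp_sum_AE subalg finite_lessThan Bochner_Integration.integrable_sum) auto
  moreover have "(\<Sum>i<N. \<Sum>j<N. \<Sum>k<N. a i j x * s k x
        * (prob (B i j \<inter> C k) - \<beta> * prob (B i j) - \<alpha> * prob (C k) + \<alpha> * \<beta>))
      = (\<Sum>i<N. \<Sum>j<N. \<Sum>k<N. a i j x * s k x * (prob (B i j \<inter> C k) - \<alpha> * \<beta>))" for x
  proof (intro sum.cong refl)
    fix i j k assume "i \<in> {..<N}" "j \<in> {..<N}" "k \<in> {..<N}"
    then show "a i j x * s k x * (prob (B i j \<inter> C k) - \<beta> * prob (B i j) - \<alpha> * prob (C k) + \<alpha> * \<beta>)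
      = a i j x * s k x * (prob (B i j \<inter> C k) - \<alpha> * \<beta>)"
      using a_diag prob_B prob_C by (cases "i = j") (auto simp: algebra_simps)
  qed
  ultimately show ?thesis unfolding T_def by simp
qed

lemma cond_cov_indicator_sums:
  assumes X: "X \<in> borel_measurable M"
      "AE x in M. X x = sqrt N * ((\<Sum>i<N. \<Sum>j<N. a i j x * indicator (B i j) x) - K)"
    and Y: "Y \<in> borel_measurable M"
      "AE x in M. Y x = (\<Sum>k<N. s k x * indicator (C k) x) / sqrt N"
  shows "AE x in M. cond_cov M F X Y x
           = (\<Sum>i<N. \<Sum>j<N. \<Sum>k<N. a i j x * s k x * (prob (B i j \<inter> C k) - \<alpha> * \<beta>))"
proof -
  interpret finite_measure_subalgebra M F
    by unfold_locales (rule subalg)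
  define Xc where "Xc x = (\<Sum>i<N. \<Sum>j<N. a i j x * (indicator (B i j) x - \<alpha>))" for x
  define Yc where "Yc x = (\<Sum>k<N. s k x * (indicator (C k) x - \<beta>))" for x
  define X0 where "X0 x = sqrt N * ((\<Sum>i<N. \<Sum>j<N. a i j x * \<alpha>) - K)" for x
  define Y0 where "Y0 x = (\<Sum>k<N. s k x * \<beta>) / sqrt N" for x
  have X_split: "AE x in M. X x = X0 x + sqrt N * Xc x"
    using X(2) by eventually_elim
      (simp add: X0_def Xc_def right_diff_distrib sum_subtractf sum.distrib algebra_simps)
  have Y_split: "AE x in M. Y x = Y0 x + (1 / sqrt N) * Yc x"
    using Y(2) by eventually_elim
      (simp add: Y0_def Yc_def right_diff_distrib sum_subtractf diff_divide_distrib)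
  have Xc: "integrable M Xc" and Yc: "integrable M Yc"
    unfolding Xc_def[abs_def] Yc_def[abs_def] using integrable_a s indicator_events
    by (intro Bochner_Integration.integrable_sum integrable_mult_centered_indicator; auto)+
  have X0: "X0 \<in> borel_measurable F" "integrable M X0"
    and Y0: "Y0 \<in> borel_measurable F" "integrable M Y0"
    unfolding X0_def[abs_def] Y0_def[abs_def] using aF sF integrable_a s by (measurable, auto)+
  have cexp_X: "AE x in M. real_cond_exp M F X x = X0 x"
    by (rule real_cond_exp_eq_offset[OF subalg X(1) X_split X0 Xc])
      (use real_cond_exp_edge_sum_centered in \<open>simp add: Xc_def[abs_def]\<close>)
  have cexp_Y: "AE x in M. real_cond_exp M F Y x = Y0 x"
    by (rule real_cond_exp_eq_offset[OF subalg Y(1) Y_split Y0 Yc])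
      (use real_cond_exp_label_sum_centered in \<open>simp add: Yc_def[abs_def]\<close>)
  have product: "Xc x * Yc x = (\<Sum>i<N. \<Sum>j<N. \<Sum>k<N.
      a i j x * s k x * ((indicator (B i j) x - \<alpha>) * (indicator (C k) x - \<beta>)))" for x
    unfolding Xc_def Yc_def by (simp add: sum_distrib_left sum_distrib_right mult_ac)
  have scale: "sqrt N * Xc x * ((1 / sqrt N) * Yc x) = Xc x * Yc x" for x
    by (cases "N = 0") (simp_all add: Xc_def)
  have "AE x in M. (X x - real_cond_exp M F X x) * (Y x - real_cond_exp M F Y x)
      = (\<Sum>i<N. \<Sum>j<N. \<Sum>k<N. a i j x * s k x * ((indicator (B i j) x - \<alpha>) * (indicator (C k) x - \<beta>)))"
    using X_split Y_split cexp_X cexp_Y by eventually_elim (simp add: scale product del: times_divide_eq_left)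
  then have "AE x in M. cond_cov M F X Y x = real_cond_exp M F (\<lambda>x. \<Sum>i<N. \<Sum>j<N. \<Sum>k<N.
      a i j x * s k x * ((indicator (B i j) x - \<alpha>) * (indicator (C k) x - \<beta>))) x"
    unfolding cond_cov_def using X(1) Y(1) a_measurable s_measurable indicator_events
    by (intro real_cond_exp_cong borel_measurable_sum borel_measurable_times borel_measurable_diff
        borel_measurable_indicator) auto
  with real_cond_exp_edge_label_products show ?thesis by eventually_elim simp
qed

end


section \<open>Convergence in probability\<close>

lemma conv_in_prob_add:
  assumes prob: "\<And>N. prob_space (Ms N)"
    and meas: "\<And>N. X N \<in> borel_measurable (Ms N)" "\<And>N. Y N \<in> borel_measurable (Ms N)"
    and X: "conv_in_prob Ms X a" and Y: "conv_in_prob Ms Y b"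
  shows "conv_in_prob Ms (\<lambda>N x. X N x + Y N x) (a + b)"
  unfolding conv_in_prob_def
proof (intro allI impI)
  fix e :: real assume e: "0 < e"
  define A where "A N = {x \<in> space (Ms N). e / 2 < \<bar>X N x - a\<bar>}" for N
  define B where "B N = {x \<in> space (Ms N). e / 2 < \<bar>Y N x - b\<bar>}" for N
  have le: "measure (Ms N) {x \<in> space (Ms N). e < \<bar>X N x + Y N x - (a + b)\<bar>}
      \<le> measure (Ms N) (A N) + measure (Ms N) (B N)" for N
  proof -
    interpret prob_space "Ms N" by (rule prob)
    have events: "A N \<in> events" "B N \<in> events"
      unfolding A_def B_def using meas by measurable
    have "x \<in> A N \<union> B N" if "x \<in> space (Ms N)" "e < \<bar>X N x + Y N x - (a + b)\<bar>" for x
    proof -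
      have "\<bar>X N x + Y N x - (a + b)\<bar> \<le> \<bar>X N x - a\<bar> + \<bar>Y N x - b\<bar>"
        using abs_triangle_ineq[of "X N x - a" "Y N x - b"] by (simp add: algebra_simps)
      then show ?thesis using that by (auto simp: A_def B_def)
    qed
    then have "{x \<in> space (Ms N). e < \<bar>X N x + Y N x - (a + b)\<bar>} \<subseteq> A N \<union> B N"
      by blast
    then have "measure (Ms N) {x \<in> space (Ms N). e < \<bar>X N x + Y N x - (a + b)\<bar>}
        \<le> measure (Ms N) (A N \<union> B N)"
      using events by (intro finite_measure_mono) auto
    also have "\<dots> \<le> measure (Ms N) (A N) + measure (Ms N) (B N)"
      using events by (rule measure_Un_le)
    finally show ?thesis .
  qed
  have "0 < e / 2" using e by simp
  then have "(\<lambda>N. measure (Ms N) (A N)) \<longlonglongrightarrow> 0" "(\<lambda>N. measure (Ms N) (B N)) \<longlonglongrightarrow> 0"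
    using X Y unfolding conv_in_prob_def A_def B_def by blast+
  then have lim: "(\<lambda>N. measure (Ms N) (A N) + measure (Ms N) (B N)) \<longlonglongrightarrow> 0"
    by (rule tendsto_add_zero)
  show "(\<lambda>N. measure (Ms N) {x \<in> space (Ms N). e < \<bar>X N x + Y N x - (a + b)\<bar>}) \<longlonglongrightarrow> 0"
    by (rule tendsto_sandwich[OF _ _ tendsto_const lim]) (use le in \<open>simp_all add: measure_nonneg\<close>)
qed

lemma abs_mult_diff_le:
  fixes u u0 x a :: real
  shows "\<bar>u * x - u0 * a\<bar> \<le> \<bar>u\<bar> * \<bar>x - a\<bar> + \<bar>u - u0\<bar> * \<bar>a\<bar>"
proof -
  have "u * x - u0 * a = u * (x - a) + (u - u0) * a"
    by (simp add: algebra_simps)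
  then show ?thesis
    using abs_triangle_ineq[of "u * (x - a)" "(u - u0) * a"] by (simp add: abs_mult)
qed

lemma conv_in_prob_mult_convergent:
  assumes prob: "\<And>N. prob_space (Ms N)" and meas: "\<And>N. X N \<in> borel_measurable (Ms N)"
    and X: "conv_in_prob Ms X a" and u: "u \<longlonglongrightarrow> u0"
  shows "conv_in_prob Ms (\<lambda>N x. u N * X N x) (u0 * a)"
  unfolding conv_in_prob_def
proof (intro allI impI)
  fix e :: real assume e: "0 < e"
  define U where "U = \<bar>u0\<bar> + 1"
  have U: "0 < U" by (simp add: U_def add_nonneg_pos)
  define A where "A N = {x \<in> space (Ms N). e / (2 * U) < \<bar>X N x - a\<bar>}" for N
  have "eventually (\<lambda>N. dist (u N) u0 < 1) sequentially"
    using u by (rule tendstoD) simp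
  then have u_bound: "eventually (\<lambda>N. \<bar>u N\<bar> \<le> U) sequentially"
    by eventually_elim (auto simp: U_def dist_real_def)
  have "(\<lambda>N. \<bar>u N - u0\<bar> * \<bar>a\<bar>) \<longlonglongrightarrow> \<bar>u0 - u0\<bar> * \<bar>a\<bar>"
    by (intro tendsto_intros u)
  then have "eventually (\<lambda>N. dist (\<bar>u N - u0\<bar> * \<bar>a\<bar>) 0 < e / 2) sequentially"
    using e by (intro tendstoD) auto
  then have u_close: "eventually (\<lambda>N. \<bar>u N - u0\<bar> * \<bar>a\<bar> < e / 2) sequentially"
    by eventually_elim simp
  have le: "eventually (\<lambda>N. measure (Ms N) {x \<in> space (Ms N). e < \<bar>u N * X N x - u0 * a\<bar>}
      \<le> measure (Ms N) (A N)) sequentially"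
    using u_bound u_close
  proof eventually_elim
    case (elim N)
    interpret prob_space "Ms N" by (rule prob)
    have close: "\<bar>u N * X N x - u0 * a\<bar> \<le> e" if "\<bar>X N x - a\<bar> \<le> e / (2 * U)" for x
    proof -
      have "\<bar>u N\<bar> * \<bar>X N x - a\<bar> \<le> U * (e / (2 * U))"
        using elim that by (intro mult_mono) auto
      moreover have "U * (e / (2 * U)) = e / 2"
        using U by simp
      ultimately show ?thesis
        using elim abs_mult_diff_le[of "u N" "X N x" u0 a] by linarith
    qed
    have "x \<in> A N" if "x \<in> space (Ms N)" "e < \<bar>u N * X N x - u0 * a\<bar>" for x
      using that close[of x] by (auto simp: A_def not_le[symmetric])
    then have "{x \<in> space (Ms N). e < \<bar>u N * X N x - u0 * a\<bar>} \<subseteq> A N"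
      by blast
    moreover have "A N \<in> events" unfolding A_def using meas by measurable
    ultimately show ?case by (intro finite_measure_mono)
  qed
  have lim: "(\<lambda>N. measure (Ms N) (A N)) \<longlonglongrightarrow> 0"
  proof -
    have "0 < e / (2 * U)" using e U by simp
    with X show ?thesis unfolding conv_in_prob_def A_def by blast
  qed
  show "(\<lambda>N. measure (Ms N) {x \<in> space (Ms N). e < \<bar>u N * X N x - u0 * a\<bar>}) \<longlonglongrightarrow> 0"
    by (rule tendsto_sandwich[OF _ le tendsto_const lim]) (simp add: measure_nonneg)
qed

lemma conv_in_prob_transfer:
  fixes X :: "nat \<Rightarrow> 'a \<Rightarrow> real" and Y :: "nat \<Rightarrow> 'b \<Rightarrow> real"
  assumes T: "\<And>N. T N \<in> measurable M (Ms N)"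
    and law: "eventually (\<lambda>N. distr M (Ms N) (T N) = Ms N) sequentially"
    and X: "\<And>N. X N \<in> borel_measurable M" and Y: "\<And>N. Y N \<in> borel_measurable (Ms N)"
    and XY: "eventually (\<lambda>N. AE x in M. X N x = Y N (T N x)) sequentially"
    and conv: "conv_in_prob Ms Y c"
  shows "conv_in_prob (\<lambda>_. M) X c"
  unfolding conv_in_prob_def
proof (intro allI impI)
  fix e :: real assume e: "0 < e"
  have "eventually (\<lambda>N. measure M {x \<in> space M. e < \<bar>X N x - c\<bar>}
      = measure (Ms N) {y \<in> space (Ms N). e < \<bar>Y N y - c\<bar>}) sequentially"
    using law XY
  proof eventually_elim
    case (elim N)
    have Y_set: "{y \<in> space (Ms N). e < \<bar>Y N y - c\<bar>} \<in> sets (Ms N)"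
      using Y[of N] by measurable
    have "measure M {x \<in> space M. e < \<bar>X N x - c\<bar>} = measure M (T N -` {y \<in> space (Ms N). e < \<bar>Y N y - c\<bar>} \<inter> space M)"
    proof (rule measure_eq_AE)
      show "AE x in M. (x \<in> {x \<in> space M. e < \<bar>X N x - c\<bar>})
          = (x \<in> T N -` {y \<in> space (Ms N). e < \<bar>Y N y - c\<bar>} \<inter> space M)"
        using elim(2) by eventually_elim (use measurable_space[OF T] in auto)
      show "{x \<in> space M. e < \<bar>X N x - c\<bar>} \<in> sets M" using X[of N] by measurable
      show "T N -` {y \<in> space (Ms N). e < \<bar>Y N y - c\<bar>} \<inter> space M \<in> sets M"
        using Y_set T by (rule measurable_sets[rotated])
    qed
    also have "\<dots> = measure (Ms N) {y \<in> space (Ms N). e < \<bar>Y N y - c\<bar>}"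
      by (subst elim(1)[symmetric], subst measure_distr) (use T Y_set in auto)
    finally show ?case .
  qed
  moreover have "(\<lambda>N. measure (Ms N) {y \<in> space (Ms N). e < \<bar>Y N y - c\<bar>}) \<longlonglongrightarrow> 0"
    using conv e unfolding conv_in_prob_def by blast
  ultimately show "(\<lambda>N. measure M {x \<in> space M. e < \<bar>X N x - c\<bar>}) \<longlonglongrightarrow> 0"
    by (simp add: tendsto_cong)
qed

section \<open>Edge counts of a sampled graph\<close>

definition sample_mult :: "nat \<Rightarrow> (nat \<Rightarrow> 'd) \<Rightarrow> nat \<Rightarrow> real" where
  "sample_mult N v i = real (card {k \<in> {..<N}. v k = v i})"

definition edge_ind :: "('d set \<Rightarrow> ('d \<times> 'd) set) \<Rightarrow> nat \<Rightarrow> (nat \<Rightarrow> 'd) \<Rightarrow> nat \<Rightarrow> nat \<Rightarrow> real" where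
  "edge_ind G N v i j = (if (v i, v j) \<in> G (v ` {..<N}) then 1 else 0)"

text \<open>Edges are counted through sample indices, each point weighted down by its multiplicity in
  the sample, so that the count is visibly a measurable function of the sample.\<close>
definition edge_count :: "('d set \<Rightarrow> ('d \<times> 'd) set) \<Rightarrow> nat \<Rightarrow> (nat \<Rightarrow> 'd) \<Rightarrow> real" where
  "edge_count G N v = (\<Sum>i<N. \<Sum>j<N. edge_ind G N v i j / (sample_mult N v i * sample_mult N v j))"

definition edge_weight :: "('d set \<Rightarrow> ('d \<times> 'd) set) \<Rightarrow> nat \<Rightarrow> (nat \<Rightarrow> 'd) \<Rightarrow> nat \<Rightarrow> nat \<Rightarrow> real" where
  "edge_weight G N v i j = (if i < N \<and> j < N then edge_ind G N v i j / edge_count G N v else 0)"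

definition lam_up_avg :: "('d set \<Rightarrow> ('d \<times> 'd) set) \<Rightarrow> ('d \<Rightarrow> real) \<Rightarrow> nat \<Rightarrow> (nat \<Rightarrow> 'd) \<Rightarrow> real" where
  "lam_up_avg G s N v = (1 / real N) * (\<Sum>i<N. s (v i) * lam_up G N (v ` {..<N}) (v i))"

definition lam_dn_avg :: "('d set \<Rightarrow> ('d \<times> 'd) set) \<Rightarrow> ('d \<Rightarrow> real) \<Rightarrow> nat \<Rightarrow> (nat \<Rightarrow> 'd) \<Rightarrow> real" where
  "lam_dn_avg G s N v = (1 / real N) * (\<Sum>i<N. s (v i) * lam_dn G N (v ` {..<N}) (v i))"

lemma sum_image_eq_sum_div_card_fibre:
  fixes g :: "'b \<Rightarrow> real"
  assumes "finite A"
  shows "(\<Sum>y\<in>f ` A. g y) = (\<Sum>i\<in>A. g (f i) / real (card {k\<in>A. f k = f i}))"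
proof -
  have "(\<Sum>i\<in>A. g (f i) / real (card {k\<in>A. f k = f i}))
      = (\<Sum>y\<in>f ` A. \<Sum>i\<in>{x\<in>A. f x = y}. g (f i) / real (card {k\<in>A. f k = f i}))"
    by (rule sum.image_gen[OF assms])
  also have "\<dots> = (\<Sum>y\<in>f ` A. \<Sum>i\<in>{x\<in>A. f x = y}. g y / real (card {k\<in>A. f k = y}))"
    by (intro sum.cong refl) auto
  also have "\<dots> = (\<Sum>y\<in>f ` A. g y)"
    using assms by (intro sum.cong refl) (auto simp: card_gt_0_iff)
  finally show ?thesis ..
qed

lemma real_card_eq_sum_if:
  assumes "finite S" "{y. P y} \<subseteq> S"
  shows "real (card {y. P y}) = (\<Sum>y\<in>S. if P y then 1 else 0)"
proof -
  have "{y. P y} = {y \<in> S. P y}" using assms by auto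
  then show ?thesis using assms by (simp add: sum.If_cases Int_absorb1)
qed

lemma edge_count_eq_card:
  assumes G: "dir_graph_functional G"
  shows "edge_count G N v = real (card (G (v ` {..<N})))"
proof -
  let ?S = "v ` {..<N}"
  have sub: "G ?S \<subseteq> ?S \<times> ?S" using G by (auto simp: dir_graph_functional_def)
  have "real (card (G ?S)) = (\<Sum>p\<in>?S \<times> ?S. if p \<in> G ?S then 1 else 0)"
    using real_card_eq_sum_if[of "?S \<times> ?S" "\<lambda>p. p \<in> G ?S"] sub by auto
  also have "\<dots> = (\<Sum>x\<in>?S. \<Sum>y\<in>?S. if (x, y) \<in> G ?S then 1 else 0)"
    by (simp add: sum.cartesian_product)
  also have "\<dots> = (\<Sum>i<N. (\<Sum>y\<in>?S. if (v i, y) \<in> G ?S then 1 else 0) / sample_mult N v i)"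
    by (subst sum_image_eq_sum_div_card_fibre) (auto simp: sample_mult_def)
  also have "\<dots> = (\<Sum>i<N. (\<Sum>j<N. edge_ind G N v i j / sample_mult N v j) / sample_mult N v i)"
    by (subst sum_image_eq_sum_div_card_fibre) (auto simp: sample_mult_def edge_ind_def)
  also have "\<dots> = edge_count G N v"
    by (simp add: edge_count_def sum_divide_distrib mult.commute)
  finally show ?thesis ..
qed

lemma out_deg_eq_sum:
  assumes G: "dir_graph_functional G" and i: "i < N"
  shows "real (out_deg G (v ` {..<N}) (v i)) = (\<Sum>j<N. edge_ind G N v i j / sample_mult N v j)"
proof -
  let ?S = "v ` {..<N}"
  have "insert (v i) ?S = ?S" using i by auto
  moreover have "{y. (v i, y) \<in> G ?S} \<subseteq> ?S" using G by (auto simp: dir_graph_functional_def)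
  ultimately have "real (out_deg G ?S (v i)) = (\<Sum>y\<in>?S. if (v i, y) \<in> G ?S then 1 else 0)"
    unfolding out_deg_def by (simp add: real_card_eq_sum_if)
  also have "\<dots> = (\<Sum>j<N. edge_ind G N v i j / sample_mult N v j)"
    by (subst sum_image_eq_sum_div_card_fibre) (auto simp: sample_mult_def edge_ind_def)
  finally show ?thesis .
qed

lemma in_deg_eq_sum:
  assumes G: "dir_graph_functional G" and i: "i < N"
  shows "real (in_deg G (v ` {..<N}) (v i)) = (\<Sum>j<N. edge_ind G N v j i / sample_mult N v j)"
proof -
  let ?S = "v ` {..<N}"
  have "insert (v i) ?S = ?S" using i by auto
  moreover have "{y. (y, v i) \<in> G ?S} \<subseteq> ?S" using G by (auto simp: dir_graph_functional_def)
  ultimately have "real (in_deg G ?S (v i)) = (\<Sum>y\<in>?S. if (y, v i) \<in> G ?S then 1 else 0)"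
    unfolding in_deg_def by (simp add: real_card_eq_sum_if)
  also have "\<dots> = (\<Sum>j<N. edge_ind G N v j i / sample_mult N v j)"
    by (subst sum_image_eq_sum_div_card_fibre) (auto simp: sample_mult_def edge_ind_def)
  finally show ?thesis .
qed

lemma lam_up_sample_eq:
  assumes "dir_graph_functional G" "i < N"
  shows "lam_up G N (v ` {..<N}) (v i)
    = real N * (\<Sum>j<N. edge_ind G N v i j / sample_mult N v j) / edge_count G N v"
proof -
  have "insert (v i) (v ` {..<N}) = v ` {..<N}" using assms by auto
  then show ?thesis
    using out_deg_eq_sum[OF assms] edge_count_eq_card[OF assms(1)] by (simp add: lam_up_def)
qed

lemma lam_dn_sample_eq:
  assumes "dir_graph_functional G" "i < N"
  shows "lam_dn G N (v ` {..<N}) (v i)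
    = real N * (\<Sum>j<N. edge_ind G N v j i / sample_mult N v j) / edge_count G N v"
proof -
  have "insert (v i) (v ` {..<N}) = v ` {..<N}" using assms by auto
  then show ?thesis
    using in_deg_eq_sum[OF assms] edge_count_eq_card[OF assms(1)] by (simp add: lam_dn_def)
qed

lemma sample_mult_inj: "inj_on v {..<N} \<Longrightarrow> i < N \<Longrightarrow> sample_mult N v i = 1"
  unfolding sample_mult_def by (subst card_1_singleton_iff[THEN iffD2]) (auto dest: inj_onD)

lemma edge_weight_abs_le:
  assumes "dir_graph_functional G"
  shows "\<bar>edge_weight G N v i j\<bar> \<le> 1"
proof (cases "i < N \<and> j < N \<and> (v i, v j) \<in> G (v ` {..<N})")
  case True
  have "finite (G (v ` {..<N}))"
    using assms unfolding dir_graph_functional_def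
    by (meson finite_SigmaI finite_imageI finite_lessThan finite_subset)
  with True have "1 \<le> card (G (v ` {..<N}))"
    by (metis One_nat_def Suc_leI card_gt_0_iff empty_iff)
  with True show ?thesis by (simp add: edge_weight_def edge_ind_def edge_count_eq_card[OF assms])
qed (auto simp: edge_weight_def edge_ind_def)

lemma edge_weight_diag: "dir_graph_functional G \<Longrightarrow> edge_weight G N v i i = 0"
  by (auto simp: edge_weight_def edge_ind_def dir_graph_functional_def)

lemma edge_weight_sum_eq_lam_avgs:
  assumes G: "dir_graph_functional G" and inj: "inj_on v {..<N}"
  shows "(\<Sum>i<N. \<Sum>j<N. edge_weight G N v i j * (u * s (v j) - w * s (v i)))
    = u * lam_dn_avg G s N v - w * lam_up_avg G s N v"
proof -
  have mult: "\<And>i. i < N \<Longrightarrow> sample_mult N v i = 1" using sample_mult_inj[OF inj] .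
  have dn: "lam_dn_avg G s N v = (\<Sum>i<N. \<Sum>j<N. edge_ind G N v i j * s (v j)) / edge_count G N v"
  proof (cases "N = 0")
    case False
    have "lam_dn_avg G s N v = (1 / real N) * (\<Sum>i<N. s (v i)
        * (real N * (\<Sum>j<N. edge_ind G N v j i) / edge_count G N v))"
      unfolding lam_dn_avg_def
      by (intro arg_cong2[where f="(*)"] refl sum.cong) (auto simp: lam_dn_sample_eq[OF G] mult)
    also have "\<dots> = (\<Sum>i<N. \<Sum>j<N. edge_ind G N v j i * s (v i)) / edge_count G N v"
      using False by (simp add: sum_distrib_left sum_distrib_right sum_divide_distrib algebra_simps)
    also have "\<dots> = (\<Sum>i<N. \<Sum>j<N. edge_ind G N v i j * s (v j)) / edge_count G N v"
      by (subst sum.swap) simp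
    finally show ?thesis .
  qed (simp add: lam_dn_avg_def)
  have up: "lam_up_avg G s N v = (\<Sum>i<N. \<Sum>j<N. edge_ind G N v i j * s (v i)) / edge_count G N v"
  proof (cases "N = 0")
    case False
    have "lam_up_avg G s N v = (1 / real N) * (\<Sum>i<N. s (v i)
        * (real N * (\<Sum>j<N. edge_ind G N v i j) / edge_count G N v))"
      unfolding lam_up_avg_def
      by (intro arg_cong2[where f="(*)"] refl sum.cong) (auto simp: lam_up_sample_eq[OF G] mult)
    also have "\<dots> = (\<Sum>i<N. \<Sum>j<N. edge_ind G N v i j * s (v i)) / edge_count G N v"
      using False by (simp add: sum_distrib_left sum_distrib_right sum_divide_distrib algebra_simps)
    finally show ?thesis .
  qed (simp add: lam_up_avg_def)
  have "(\<Sum>i<N. \<Sum>j<N. edge_weight G N v i j * (u * s (v j) - w * s (v i)))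
      = (\<Sum>i<N. \<Sum>j<N. u * (edge_ind G N v i j * s (v j) / edge_count G N v)
          - w * (edge_ind G N v i j * s (v i) / edge_count G N v))"
    unfolding edge_weight_def
    by (intro sum.cong refl) (simp add: diff_divide_distrib right_diff_distrib mult.left_commute)
  also have "\<dots> = u * lam_dn_avg G s N v - w * lam_up_avg G s N v"
    unfolding dn up
    by (simp only: sum_subtractf sum_distrib_left[symmetric] sum_divide_distrib[symmetric])
  finally show ?thesis .
qed

abbreviation borel_samples :: "nat \<Rightarrow> (nat \<Rightarrow> 'd::euclidean_space) measure" where
  "borel_samples N \<equiv> PiM {..<N} (\<lambda>_. borel)"

lemma sample_mult_measurable:
  assumes "i < N"
  shows "(\<lambda>v. sample_mult N v i) \<in> borel_measurable (borel_samples N)"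
proof -
  have eq: "(\<lambda>v. sample_mult N v i) = (\<lambda>v. \<Sum>k<N. if v k = v i then 1 else (0::real))"
    unfolding sample_mult_def by (rule ext) (simp add: sum.inter_filter[symmetric])
  moreover have "(\<lambda>v. \<Sum>k<N. if v k = v i then 1 else (0::real)) \<in> borel_measurable (borel_samples N)"
  proof (intro borel_measurable_sum measurable_If)
    fix k assume "k \<in> {..<N}"
    then show "{v \<in> space (borel_samples N). v k = v i} \<in> sets (borel_samples N)"
      using assms by (intro measurable_equality_set measurable_component_singleton) auto
  qed auto
  ultimately show ?thesis by (simp only: eq)
qed

lemma edge_ind_measurable:
  assumes "graph_measurable G" "i < N" "j < N"
  shows "(\<lambda>v. edge_ind G N v i j) \<in> borel_measurable (borel_samples N)"
proof -
  have "{v \<in> space (borel_samples N). (v i, v j) \<in> G (v ` {..<N})} \<in> sets (borel_samples N)"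
    using assms unfolding graph_measurable_def by blast
  then have "(\<lambda>v. indicator {v \<in> space (borel_samples N). (v i, v j) \<in> G (v ` {..<N})} v :: real)
      \<in> borel_measurable (borel_samples N)"
    by simp
  then show ?thesis
    by (rule measurable_cong[THEN iffD1, rotated]) (auto simp: edge_ind_def indicator_def)
qed

lemma edge_count_measurable:
  "graph_measurable G \<Longrightarrow> edge_count G N \<in> borel_measurable (borel_samples N)"
  unfolding edge_count_def[abs_def]
  by (intro borel_measurable_sum borel_measurable_divide borel_measurable_times
      edge_ind_measurable sample_mult_measurable) auto

lemma edge_weight_measurable:
  "graph_measurable G \<Longrightarrow> (\<lambda>v. edge_weight G N v i j) \<in> borel_measurable (borel_samples N)"
  unfolding edge_weight_def
  by (cases "i < N \<and> j < N") (auto intro!: borel_measurable_divide edge_ind_measurable edge_count_measurable)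

lemma lam_avgs_measurable:
  assumes "dir_graph_functional G" "graph_measurable G" "s \<in> borel_measurable borel"
  shows "lam_up_avg G s N \<in> borel_measurable (borel_samples N)"
    and "lam_dn_avg G s N \<in> borel_measurable (borel_samples N)"
proof -
  have s: "(\<lambda>v. s (v i)) \<in> borel_measurable (borel_samples N)" if "i < N" for i
    using that by (intro measurable_compose[OF _ assms(3)] measurable_component_singleton) auto
  have "lam_up_avg G s N = (\<lambda>v. (1 / real N) * (\<Sum>i<N. s (v i)
      * (real N * (\<Sum>j<N. edge_ind G N v i j / sample_mult N v j) / edge_count G N v)))"
    unfolding lam_up_avg_def by (auto simp: lam_up_sample_eq[OF assms(1)] intro!: sum.cong)
  then show "lam_up_avg G s N \<in> borel_measurable (borel_samples N)"
    using s assms(2)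
    by (simp only:) (intro borel_measurable_times borel_measurable_sum borel_measurable_divide
        edge_ind_measurable sample_mult_measurable edge_count_measurable; auto)
  have "lam_dn_avg G s N = (\<lambda>v. (1 / real N) * (\<Sum>i<N. s (v i)
      * (real N * (\<Sum>j<N. edge_ind G N v j i / sample_mult N v j) / edge_count G N v)))"
    unfolding lam_dn_avg_def by (auto simp: lam_dn_sample_eq[OF assms(1)] intro!: sum.cong)
  then show "lam_dn_avg G s N \<in> borel_measurable (borel_samples N)"
    using s assms(2)
    by (simp only:) (intro borel_measurable_times borel_measurable_sum borel_measurable_divide
        edge_ind_measurable sample_mult_measurable edge_count_measurable; auto)
qed

section \<open>The bootstrap model\<close>

lemma pred_PiM_component_eq:
  assumes "i \<in> I"
  shows "Measurable.pred (PiM I (\<lambda>_. count_space UNIV)) (\<lambda>v. v i = b)"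
proof -
  have "(\<lambda>v. v i) \<in> measurable (PiM I (\<lambda>_. count_space UNIV)) (count_space UNIV)"
    using assms by (rule measurable_component_singleton)
  then show ?thesis by (rule pred_eq_const1) simp
qed

locale bootstrap_sample =
  fixes f :: "'k::euclidean_space \<Rightarrow> 'd::euclidean_space \<Rightarrow> real"
    and \<theta>1 :: 'k and gradf :: "'d \<Rightarrow> 'k" and h :: 'k
    and G :: "'d set \<Rightarrow> ('d \<times> 'd) set"
    and M :: "'w measure" and Z :: "nat \<Rightarrow> 'w \<Rightarrow> 'd"
    and c :: "nat \<Rightarrow> nat \<Rightarrow> 'w \<Rightarrow> bool" and N1 :: "nat \<Rightarrow> nat" and p :: real
    and P :: "'d measure" and \<eta> :: "'d \<Rightarrow> 'k" and F :: "'w measure"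
  assumes P_def: "P = density lborel (\<lambda>z. ennreal (f \<theta>1 z))"
    and \<eta>_def: "\<eta> = score f \<theta>1 gradf"
    and F_def: "F = vimage_algebra (space M) (\<lambda>\<omega> i. Z i \<omega>) (PiM UNIV (\<lambda>_. borel :: 'd measure))"
    and f1_measurable: "f \<theta>1 \<in> borel_measurable lborel"
    and f1_integral: "(\<integral>\<^sup>+ z. ennreal (f \<theta>1 z) \<partial>lborel) = 1"
    and gradf_measurable: "gradf \<in> borel_measurable lborel"
    and score_moment: "(\<integral>\<^sup>+ z. ennreal (\<bar>h \<bullet> \<eta> z\<bar> ^ 4) \<partial>P) < \<infinity>"
    and G_graph: "dir_graph_functional G"
    and G_measurable: "graph_measurable G"
    and C: "cond_C G P (\<lambda>z. h \<bullet> \<eta> z) (\<lambda>z. h \<bullet> gradf z)"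
    and M_prob: "prob_space M"
    and Z_distr: "\<And>i. distributed M lborel (Z i) (\<lambda>z. ennreal (f \<theta>1 z))"
    and Z_indep: "prob_space.indep_vars M (\<lambda>_. borel) Z UNIV"
    and c_indep: "\<And>N. prob_space.indep_vars M (\<lambda>_. count_space UNIV) (c N) {..<N}"
    and c_prob: "\<And>N i. i < N \<Longrightarrow> measure M {\<omega> \<in> space M. c N i \<omega>} = real (N1 N) / real N"
    and c_Z_indep: "\<And>N. prob_space.indep_set M (sets F)
                       {(\<lambda>\<omega>. restrict (\<lambda>i. c N i \<omega>) {..<N}) -` A \<inter> space M | A.
                          A \<in> sets (PiM {..<N} (\<lambda>_. count_space UNIV))}"
    and N1_lim: "(\<lambda>N. real (N1 N) / real N) \<longlonglongrightarrow> p"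
begin

sublocale prob_space M by (rule M_prob)

abbreviation score_h :: "'d \<Rightarrow> real" where
  "score_h z \<equiv> h \<bullet> \<eta> z"

definition \<pi> :: "nat \<Rightarrow> real" where
  "\<pi> N = real (N1 N) / real N"

lemma score_h_measurable: "score_h \<in> borel_measurable borel"
proof -
  have "f \<theta>1 \<in> borel_measurable borel" "gradf \<in> borel_measurable borel"
    using f1_measurable gradf_measurable by simp_all
  then show ?thesis unfolding \<eta>_def score_def by measurable
qed

lemma Z_measurable [measurable]: "Z i \<in> borel_measurable M"
  using Z_distr[of i] unfolding distributed_def by simp

lemma distr_Z: "distr M borel (Z i) = P"
proof -
  have "distr M borel (Z i) = distr M lborel (Z i)"
    by (rule distr_cong) auto
  also have "\<dots> = P"
    using Z_distr[of i] unfolding distributed_def P_def by simp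
  finally show ?thesis .
qed

lemma prob_space_P: "prob_space P"
  by standard (use f1_integral f1_measurable in \<open>simp add: P_def emeasure_density\<close>)

lemma sets_P: "sets P = sets borel"
  unfolding P_def by simp

text \<open>The fourth moment in (R) is only used to make the score integrable.\<close>
lemma integrable_score_h: "integrable P score_h"
proof (rule integrableI_bounded)
  interpret P: prob_space P by (rule prob_space_P)
  show meas: "score_h \<in> borel_measurable P"
    using score_h_measurable by (simp add: measurable_cong_sets[OF sets_P refl])
  have "ennreal (norm (score_h z)) \<le> 1 + ennreal (\<bar>score_h z\<bar> ^ 4)" for z
  proof -
    have "\<bar>score_h z\<bar> \<le> 1 + \<bar>score_h z\<bar> ^ 4"
    proof (cases "\<bar>score_h z\<bar> \<le> 1")
      case False
      then have "\<bar>score_h z\<bar> ^ 1 \<le> \<bar>score_h z\<bar> ^ 4" by (intro power_increasing) auto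
      then show ?thesis by simp
    qed (simp add: add_increasing2)
    then have "ennreal \<bar>score_h z\<bar> \<le> ennreal (1 + \<bar>score_h z\<bar> ^ 4)" by (rule ennreal_leI)
    also have "\<dots> = 1 + ennreal (\<bar>score_h z\<bar> ^ 4)" by (subst ennreal_plus) auto
    finally show ?thesis by simp
  qed
  then have "(\<integral>\<^sup>+ z. ennreal (norm (score_h z)) \<partial>P) \<le> (\<integral>\<^sup>+ z. 1 + ennreal (\<bar>score_h z\<bar> ^ 4) \<partial>P)"
    by (intro nn_integral_mono)
  also have "\<dots> = 1 + (\<integral>\<^sup>+ z. ennreal (\<bar>score_h z\<bar> ^ 4) \<partial>P)"
    using meas by (subst nn_integral_add) (auto simp: P.emeasure_space_1)
  also have "\<dots> < \<infinity>"
    using score_moment by simp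
  finally show "(\<integral>\<^sup>+ z. ennreal (norm (score_h z)) \<partial>P) < \<infinity>" .
qed

lemma integrable_score_h_Z: "integrable M (\<lambda>\<omega>. score_h (Z i \<omega>))"
proof -
  have "integrable (distr M borel (Z i)) score_h"
    using integrable_score_h distr_Z by simp
  then show ?thesis
    using score_h_measurable by (subst (asm) integrable_distr_eq) auto
qed

lemma Z_vector_measurable_F: "(\<lambda>\<omega> i. Z i \<omega>) \<in> measurable F (PiM UNIV (\<lambda>_. borel :: 'd measure))"
  unfolding F_def by (rule measurable_vimage_algebra1) (simp add: space_PiM)

lemma subalgebra_F: "subalgebra M F"
proof -
  have "(\<lambda>\<omega> i. Z i \<omega>) \<in> measurable M (PiM UNIV (\<lambda>_. borel :: 'd measure))"
    by (intro measurable_PiM_single') auto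
  then show ?thesis unfolding subalgebra_def F_def
    by (subst sets_vimage_algebra2) (auto simp: space_PiM intro: measurable_sets)
qed

lemma Z_measurable_F [measurable]: "Z i \<in> borel_measurable F"
  using measurable_compose[OF Z_vector_measurable_F measurable_component_singleton[of i UNIV]] by simp

definition sample :: "nat \<Rightarrow> 'w \<Rightarrow> nat \<Rightarrow> 'd" where
  "sample N \<omega> = restrict (\<lambda>i. Z i \<omega>) {..<N}"

lemma sample_measurable_F: "sample N \<in> measurable F (borel_samples N)"
  unfolding sample_def
  using measurable_compose[OF Z_vector_measurable_F measurable_restrict_subset[of "{..<N}" UNIV]] by simp

lemma sample_measurable: "sample N \<in> measurable M (borel_samples N)"
  using sample_measurable_F measurable_from_subalg[OF subalgebra_F] by blast

lemma sample_image: "sample N \<omega> ` {..<N} = (\<lambda>k. Z k \<omega>) ` {..<N}"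
  unfolding sample_def by auto

definition labels :: "nat \<Rightarrow> 'w \<Rightarrow> nat \<Rightarrow> bool" where
  "labels N \<omega> = restrict (\<lambda>i. c N i \<omega>) {..<N}"

definition label_events :: "nat \<Rightarrow> 'w set set" where
  "label_events N = {labels N -` A \<inter> space M | A. A \<in> sets (PiM {..<N} (\<lambda>_. count_space UNIV))}"

lemma label_events_indep: "A \<in> sets F \<Longrightarrow> E \<in> label_events N \<Longrightarrow> prob (A \<inter> E) = prob A * prob E"
  using indep_setD[OF c_Z_indep[of N]] unfolding label_events_def labels_def by blast

lemma label_events_subset: "label_events N \<subseteq> events"
  using indep_setD_ev2[OF c_Z_indep[of N]] unfolding label_events_def labels_def by blast

lemma label_event_in_label_events:
  assumes "Measurable.pred (PiM {..<N} (\<lambda>_. count_space UNIV)) Q"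
  shows "{\<omega> \<in> space M. Q (labels N \<omega>)} \<in> label_events N"
proof -
  have "labels N \<omega> \<in> space (PiM {..<N} (\<lambda>_. count_space (UNIV::bool set)))" for \<omega>
    by (auto simp: labels_def space_PiM)
  then have "{\<omega> \<in> space M. Q (labels N \<omega>)}
      = labels N -` {v \<in> space (PiM {..<N} (\<lambda>_. count_space UNIV)). Q v} \<inter> space M"
    by auto
  moreover have "{v \<in> space (PiM {..<N} (\<lambda>_. count_space UNIV)). Q v} \<in> sets (PiM {..<N} (\<lambda>_. count_space UNIV))"
    using assms by (simp add: pred_def)
  ultimately show ?thesis unfolding label_events_def by blast
qed

lemma prob_labels_eq:
  assumes "J \<subseteq> {..<N}" "J \<noteq> {}"
  shows "prob {\<omega> \<in> space M. \<forall>l\<in>J. c N l \<omega> = b l} = (\<Prod>l\<in>J. prob {\<omega> \<in> space M. c N l \<omega> = b l})"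
proof -
  have "finite J" using assms finite_subset by auto
  then have "prob (\<Inter>l\<in>J. c N l -` {b l} \<inter> space M) = (\<Prod>l\<in>J. prob (c N l -` {b l} \<inter> space M))"
    using assms by (intro indep_varsD[OF c_indep[of N]]) auto
  moreover have "(\<Inter>l\<in>J. c N l -` {b l} \<inter> space M) = {\<omega> \<in> space M. \<forall>l\<in>J. c N l \<omega> = b l}"
    using assms by auto
  ultimately show ?thesis by (simp add: vimage_def Int_def conj_commute)
qed

lemma prob_label:
  assumes "l < N"
  shows "prob {\<omega> \<in> space M. c N l \<omega> = b} = (if b then \<pi> N else 1 - \<pi> N)"
proof -
  have "c N l \<in> measurable M (count_space UNIV)"
    using c_indep[of N] assms unfolding indep_vars_def by auto
  then have "{\<omega> \<in> space M. c N l \<omega>} \<in> events" by measurable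
  moreover have "{\<omega> \<in> space M. c N l \<omega> = False} = space M - {\<omega> \<in> space M. c N l \<omega>}" by auto
  ultimately show ?thesis using prob_compl c_prob[OF assms] by (cases b) (auto simp: \<pi>_def)
qed

definition cross_event :: "nat \<Rightarrow> nat \<Rightarrow> nat \<Rightarrow> 'w set" where
  "cross_event N i j = {\<omega> \<in> space M. c N i \<omega> \<and> \<not> c N j \<omega>}"

definition label2_event :: "nat \<Rightarrow> nat \<Rightarrow> 'w set" where
  "label2_event N k = {\<omega> \<in> space M. \<not> c N k \<omega>}"

lemma label_events_memberships:
  assumes "i < N" "j < N" "k < N"
  shows "cross_event N i j \<in> label_events N" "label2_event N k \<in> label_events N"
    "cross_event N i j \<inter> label2_event N k \<in> label_events N"
proof -
  have [simp]: "l < N \<Longrightarrow> labels N \<omega> l = c N l \<omega>" for l \<omega> by (simp add: labels_def)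
  have "cross_event N i j = {\<omega> \<in> space M. labels N \<omega> i = True \<and> labels N \<omega> j = False}"
    using assms by (auto simp: cross_event_def)
  also have "\<dots> \<in> label_events N"
    using assms by (intro label_event_in_label_events pred_intros_logic pred_PiM_component_eq) auto
  finally show "cross_event N i j \<in> label_events N" .
  have "label2_event N k = {\<omega> \<in> space M. labels N \<omega> k = False}"
    using assms by (auto simp: label2_event_def)
  also have "\<dots> \<in> label_events N"
    using assms by (intro label_event_in_label_events pred_PiM_component_eq) auto
  finally show "label2_event N k \<in> label_events N" .
  have "cross_event N i j \<inter> label2_event N k
      = {\<omega> \<in> space M. labels N \<omega> i = True \<and> labels N \<omega> j = False \<and> labels N \<omega> k = False}"
    using assms by (auto simp: cross_event_def label2_event_def)
  also have "\<dots> \<in> label_events N"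
    using assms by (intro label_event_in_label_events pred_intros_logic pred_PiM_component_eq) auto
  finally show "cross_event N i j \<inter> label2_event N k \<in> label_events N" .
qed

lemma prob_label2_event: "k < N \<Longrightarrow> prob (label2_event N k) = 1 - \<pi> N"
  using prob_label[of k N False] unfolding label2_event_def by simp

lemma prob_cross_event:
  assumes "i < N" "j < N" "i \<noteq> j"
  shows "prob (cross_event N i j) = \<pi> N * (1 - \<pi> N)"
proof -
  have "cross_event N i j = {\<omega> \<in> space M. \<forall>l\<in>{i, j}. c N l \<omega> = (l = i)}"
    using assms by (auto simp: cross_event_def)
  also have "prob \<dots> = (\<Prod>l\<in>{i, j}. prob {\<omega> \<in> space M. c N l \<omega> = (l = i)})"
    using assms by (intro prob_labels_eq) auto
  finally show ?thesis using assms prob_label[of i N True] prob_label[of j N False] by simp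
qed

lemma prob_cross_label2_event:
  assumes "i < N" "j < N" "k < N" "i \<noteq> j"
  shows "prob (cross_event N i j \<inter> label2_event N k)
    = (if k = i then 0 else if k = j then \<pi> N * (1 - \<pi> N) else \<pi> N * (1 - \<pi> N) * (1 - \<pi> N))"
proof -
  consider "k = i" | "k = j" | "k \<noteq> i" "k \<noteq> j" by blast
  then show ?thesis
  proof cases
    case 1
    then have "cross_event N i j \<inter> label2_event N k = {}"
      by (auto simp: cross_event_def label2_event_def)
    with 1 show ?thesis by simp
  next
    case 2
    then have "cross_event N i j \<inter> label2_event N k = cross_event N i j"
      by (auto simp: cross_event_def label2_event_def)
    with 2 assms show ?thesis by (simp add: prob_cross_event)
  next
    case 3
    have "cross_event N i j \<inter> label2_event N k = {\<omega> \<in> space M. \<forall>l\<in>{i, j, k}. c N l \<omega> = (l = i)}"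
      using assms 3 by (auto simp: cross_event_def label2_event_def)
    also have "prob \<dots> = (\<Prod>l\<in>{i, j, k}. prob {\<omega> \<in> space M. c N l \<omega> = (l = i)})"
      using assms by (intro prob_labels_eq) auto
    finally show ?thesis
      using assms 3 prob_label[of i N True] prob_label[of j N False] prob_label[of k N False] by simp
  qed
qed

text \<open>Only k = j (joint probability \<pi>(1-\<pi>)) and k = i (joint probability 0) deviate from the
  value \<pi>(1-\<pi>)^2 of independent labels.\<close>
lemma label_weighted_sum:
  assumes "i < N" "j < N" "i \<noteq> j"
  shows "(\<Sum>k<N. x k * (prob (cross_event N i j \<inter> label2_event N k) - \<pi> N * (1 - \<pi> N) * (1 - \<pi> N)))
    = \<pi> N ^ 2 * (1 - \<pi> N) * x j - \<pi> N * (1 - \<pi> N) ^ 2 * x i"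
proof -
  have "(\<Sum>k<N. x k * (prob (cross_event N i j \<inter> label2_event N k) - \<pi> N * (1 - \<pi> N) * (1 - \<pi> N)))
      = (\<Sum>k<N. (if k = i then - (\<pi> N * (1 - \<pi> N) ^ 2 * x i) else 0)
          + (if k = j then \<pi> N ^ 2 * (1 - \<pi> N) * x j else 0))"
    using assms by (intro sum.cong refl) (auto simp: prob_cross_label2_event power2_eq_square algebra_simps)
  also have "\<dots> = \<pi> N ^ 2 * (1 - \<pi> N) * x j - \<pi> N * (1 - \<pi> N) ^ 2 * x i"
    using assms by (simp add: sum.distrib)
  finally show ?thesis .
qed

lemma boot_T_eq:
  assumes "\<omega> \<in> space M"
  shows "boot_T G Z c N \<omega>
    = (\<Sum>i<N. \<Sum>j<N. edge_weight G N (sample N \<omega>) i j * indicator (cross_event N i j) \<omega>)"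
proof -
  have "boot_T G Z c N \<omega> = (\<Sum>i<N. \<Sum>j<N. (if i \<noteq> j \<and> c N i \<omega> \<and> \<not> c N j \<omega> \<and>
      (Z i \<omega>, Z j \<omega>) \<in> G ((\<lambda>k. Z k \<omega>) ` {..<N}) then 1 else 0)
      / real (card (G ((\<lambda>k. Z k \<omega>) ` {..<N}))))"
    unfolding boot_T_def by (simp add: sum_divide_distrib)
  also have "\<dots> = (\<Sum>i<N. \<Sum>j<N. edge_weight G N (sample N \<omega>) i j * indicator (cross_event N i j) \<omega>)"
    using assms G_graph
    by (intro sum.cong refl)
      (auto simp: edge_weight_def edge_ind_def edge_count_eq_card sample_image cross_event_def
        sample_def dir_graph_functional_def)
  finally show ?thesis .
qed

lemma boot_L_eq:
  assumes "\<omega> \<in> space M"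
  shows "boot_L score_h Z c N \<omega> = (\<Sum>k<N. score_h (Z k \<omega>) * indicator (label2_event N k) \<omega>) / sqrt N"
proof -
  have "(\<Sum>k<N. score_h (Z k \<omega>) * indicator (label2_event N k) \<omega>)
      = (\<Sum>k<N. score_h (Z k \<omega>) * (if c N k \<omega> then 0 else 1))"
    using assms by (intro sum.cong refl) (simp add: label2_event_def indicator_def)
  then show ?thesis by (simp add: boot_L_def)
qed

lemma edge_weight_sample_measurable_F:
  "(\<lambda>\<omega>. edge_weight G N (sample N \<omega>) i j) \<in> borel_measurable F"
  using measurable_compose[OF sample_measurable_F edge_weight_measurable[OF G_measurable]] .

lemma label_events_in_events:
  assumes "i < N" "j < N"
  shows "cross_event N i j \<in> events" "label2_event N i \<in> events"
  using label_events_memberships(1,2)[OF assms assms(1)] label_events_subset by auto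

lemma boot_measurable:
  "boot_R G Z c N1 N \<in> borel_measurable M" "boot_L score_h Z c N \<in> borel_measurable M"
proof -
  have "(\<lambda>\<omega>. edge_weight G N (sample N \<omega>) i j) \<in> borel_measurable M" for i j
    using edge_weight_sample_measurable_F measurable_from_subalg[OF subalgebra_F] by blast
  then have "(\<lambda>\<omega>. sqrt N * ((\<Sum>i<N. \<Sum>j<N. edge_weight G N (sample N \<omega>) i j * indicator (cross_event N i j) \<omega>)
      - real (N1 N) * real (N - N1 N) / (real N * (real N - 1)))) \<in> borel_measurable M"
    using label_events_in_events
    by (intro borel_measurable_times borel_measurable_const borel_measurable_diff
        borel_measurable_sum borel_measurable_indicator) auto
  then show "boot_R G Z c N1 N \<in> borel_measurable M"
    by (rule measurable_cong[THEN iffD1, rotated]) (simp add: boot_R_def boot_T_eq)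
  have "(\<lambda>\<omega>. (\<Sum>k<N. score_h (Z k \<omega>) * indicator (label2_event N k) \<omega>) / sqrt N) \<in> borel_measurable M"
    using label_events_in_events
    by (intro borel_measurable_divide borel_measurable_sum borel_measurable_times
        borel_measurable_indicator measurable_compose[OF Z_measurable score_h_measurable]) auto
  then show "boot_L score_h Z c N \<in> borel_measurable M"
    by (rule measurable_cong[THEN iffD1, rotated]) (simp add: boot_L_eq)
qed

lemma cond_cov_eq_edge_sum:
  "AE \<omega> in M. cond_cov M F (boot_R G Z c N1 N) (boot_L score_h Z c N) \<omega>
     = (\<Sum>i<N. \<Sum>j<N. edge_weight G N (sample N \<omega>) i j
         * (\<pi> N ^ 2 * (1 - \<pi> N) * score_h (Z j \<omega>) - \<pi> N * (1 - \<pi> N) ^ 2 * score_h (Z i \<omega>)))"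
proof -
  have "edge_label_model M F (label_events N) N (\<lambda>i j \<omega>. edge_weight G N (sample N \<omega>) i j)
      (\<lambda>k \<omega>. score_h (Z k \<omega>)) (cross_event N) (label2_event N) (\<pi> N * (1 - \<pi> N)) (1 - \<pi> N)"
    using label_events_memberships measurable_compose[OF Z_measurable_F score_h_measurable]
    by (intro edge_label_model.intro[OF M_prob] edge_label_model_axioms.intro)
      (simp_all add: subalgebra_F label_events_subset label_events_indep prob_cross_event
        prob_label2_event edge_weight_sample_measurable_F edge_weight_abs_le[OF G_graph]
        edge_weight_diag[OF G_graph] integrable_score_h_Z)
  then have "AE \<omega> in M. cond_cov M F (boot_R G Z c N1 N) (boot_L score_h Z c N) \<omega>
     = (\<Sum>i<N. \<Sum>j<N. \<Sum>k<N. edge_weight G N (sample N \<omega>) i j * score_h (Z k \<omega>)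
         * (prob (cross_event N i j \<inter> label2_event N k) - \<pi> N * (1 - \<pi> N) * (1 - \<pi> N)))"
  proof (rule edge_label_model.cond_cov_indicator_sums)
    show "AE \<omega> in M. boot_R G Z c N1 N \<omega> = sqrt N * ((\<Sum>i<N. \<Sum>j<N. edge_weight G N (sample N \<omega>) i j
        * indicator (cross_event N i j) \<omega>) - real (N1 N) * real (N - N1 N) / (real N * (real N - 1)))"
      by (rule AE_I2) (simp add: boot_R_def boot_T_eq)
    show "AE \<omega> in M. boot_L score_h Z c N \<omega>
        = (\<Sum>k<N. score_h (Z k \<omega>) * indicator (label2_event N k) \<omega>) / sqrt N"
      by (rule AE_I2) (simp add: boot_L_eq)
  qed (fact boot_measurable)+
  moreover have "(\<Sum>k<N. edge_weight G N (sample N \<omega>) i j * score_h (Z k \<omega>)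
        * (prob (cross_event N i j \<inter> label2_event N k) - \<pi> N * (1 - \<pi> N) * (1 - \<pi> N)))
      = edge_weight G N (sample N \<omega>) i j
        * (\<pi> N ^ 2 * (1 - \<pi> N) * score_h (Z j \<omega>) - \<pi> N * (1 - \<pi> N) ^ 2 * score_h (Z i \<omega>))"
    if "i < N" "j < N" for i j \<omega>
  proof (cases "i = j")
    case False
    have "(\<Sum>k<N. edge_weight G N (sample N \<omega>) i j * score_h (Z k \<omega>)
        * (prob (cross_event N i j \<inter> label2_event N k) - \<pi> N * (1 - \<pi> N) * (1 - \<pi> N)))
      = edge_weight G N (sample N \<omega>) i j * (\<Sum>k<N. score_h (Z k \<omega>)
        * (prob (cross_event N i j \<inter> label2_event N k) - \<pi> N * (1 - \<pi> N) * (1 - \<pi> N)))"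
      by (simp add: sum_distrib_left mult.assoc)
    with label_weighted_sum[OF that False] show ?thesis by simp
  qed (simp add: edge_weight_diag[OF G_graph])
  ultimately show ?thesis
    by (auto elim!: AE_mp intro!: AE_I2 sum.cong)
qed

lemma P_singleton: "emeasure P {z} = 0"
proof -
  have "emeasure P {z} = (\<integral>\<^sup>+ y. ennreal (f \<theta>1 y) * indicator {z} y \<partial>lborel)"
    unfolding P_def using f1_measurable by (intro emeasure_density) auto
  also have "\<dots> = 0" by (rule nn_integral_null_set) (simp add: null_sets_def)
  finally show ?thesis .
qed

lemma Z_ties_null:
  assumes "i \<noteq> j"
  shows "{\<omega> \<in> space M. Z i \<omega> = Z j \<omega>} \<in> null_sets M"
proof -
  interpret P: prob_space P by (rule prob_space_P)
  have "indep_var (PiM {i} (\<lambda>_. borel)) (\<lambda>\<omega>. restrict (\<lambda>k. Z k \<omega>) {i})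
      (PiM {j} (\<lambda>_. borel)) (\<lambda>\<omega>. restrict (\<lambda>k. Z k \<omega>) {j})"
    using assms by (intro indep_var_restrict[OF Z_indep]) auto
  then have "indep_var borel ((\<lambda>v. v i) \<circ> (\<lambda>\<omega>. restrict (\<lambda>k. Z k \<omega>) {i}))
      borel ((\<lambda>v. v j) \<circ> (\<lambda>\<omega>. restrict (\<lambda>k. Z k \<omega>) {j}))"
    by (rule indep_var_compose) auto
  then have "indep_var borel (Z i) borel (Z j)" by (simp add: comp_def)
  then have pair: "distr M (borel \<Otimes>\<^sub>M borel) (\<lambda>\<omega>. (Z i \<omega>, Z j \<omega>)) = P \<Otimes>\<^sub>M P"
    unfolding indep_var_distribution_eq by (simp add: distr_Z)
  define D where "D = {x \<in> space (borel \<Otimes>\<^sub>M borel :: ('d \<times> 'd) measure). fst x = snd x}"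
  have D: "D \<in> sets (borel \<Otimes>\<^sub>M borel)" unfolding D_def by measurable
  have "(\<lambda>\<omega>. (Z i \<omega>, Z j \<omega>)) -` D \<inter> space M = {\<omega> \<in> space M. Z i \<omega> = Z j \<omega>}"
    by (auto simp: D_def space_pair_measure)
  then have "emeasure M {\<omega> \<in> space M. Z i \<omega> = Z j \<omega>} = emeasure (P \<Otimes>\<^sub>M P) D"
    using D by (simp add: pair[symmetric] emeasure_distr)
  also have "\<dots> = (\<integral>\<^sup>+ x. emeasure P (Pair x -` D) \<partial>P)"
    using D by (intro P.emeasure_pair_measure_alt) (simp add: sets_pair_measure_cong[OF sets_P sets_P])
  also have "\<dots> = 0"
    by (simp add: D_def space_pair_measure P_singleton vimage_def)
  finally show ?thesis by (simp add: null_sets_def)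
qed

lemma AE_sample_inj: "AE \<omega> in M. inj_on (sample N \<omega>) {..<N}"
proof -
  have "AE \<omega> in M. \<forall>i\<in>{..<N}. \<forall>j\<in>{..<N}. i \<noteq> j \<longrightarrow> Z i \<omega> \<noteq> Z j \<omega>"
  proof (intro AE_finite_allI finite_lessThan)
    fix i j :: nat
    show "AE \<omega> in M. i \<noteq> j \<longrightarrow> Z i \<omega> \<noteq> Z j \<omega>"
      using AE_not_in[OF Z_ties_null[of i j]] by (cases "i = j") (auto elim!: AE_mp)
  qed
  then show ?thesis by eventually_elim (auto simp: inj_on_def sample_def)
qed

lemma sets_sample_law: "sets (sample_law P N) = sets (borel_samples N)"
  unfolding sample_law_def by (intro sets_PiM_cong) (auto simp: sets_P)

lemma distr_sample: "N \<noteq> 0 \<Longrightarrow> distr M (sample_law P N) (sample N) = sample_law P N"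
proof -
  assume N: "N \<noteq> 0"
  have "indep_vars (\<lambda>_. borel) Z {..<N}" by (rule indep_vars_subset[OF Z_indep]) auto
  then have "distr M (borel_samples N) (\<lambda>\<omega>. \<lambda>i\<in>{..<N}. Z i \<omega>) = PiM {..<N} (\<lambda>i. distr M borel (Z i))"
    using N by (subst (asm) indep_vars_iff_distr_eq_PiM') auto
  then have "distr M (borel_samples N) (sample N) = sample_law P N"
    unfolding sample_law_def sample_def by (simp add: distr_Z)
  moreover have "distr M (sample_law P N) (sample N) = distr M (borel_samples N) (sample N)"
    by (rule distr_cong) (simp_all add: sets_sample_law)
  ultimately show ?thesis by simp
qed

lemma cond_cov_eq_lam_avgs:
  "AE \<omega> in M. cond_cov M F (boot_R G Z c N1 N) (boot_L score_h Z c N) \<omega>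
     = \<pi> N ^ 2 * (1 - \<pi> N) * lam_dn_avg G score_h N (sample N \<omega>)
       - \<pi> N * (1 - \<pi> N) ^ 2 * lam_up_avg G score_h N (sample N \<omega>)"
  using cond_cov_eq_edge_sum[of N] AE_sample_inj[of N]
proof eventually_elim
  case (elim \<omega>)
  have "(\<Sum>i<N. \<Sum>j<N. edge_weight G N (sample N \<omega>) i j
        * (\<pi> N ^ 2 * (1 - \<pi> N) * score_h (Z j \<omega>) - \<pi> N * (1 - \<pi> N) ^ 2 * score_h (Z i \<omega>)))
      = (\<Sum>i<N. \<Sum>j<N. edge_weight G N (sample N \<omega>) i j
        * (\<pi> N ^ 2 * (1 - \<pi> N) * score_h (sample N \<omega> j)
          - \<pi> N * (1 - \<pi> N) ^ 2 * score_h (sample N \<omega> i)))"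
    by (intro sum.cong refl) (simp add: sample_def)
  with elim edge_weight_sum_eq_lam_avgs[OF G_graph elim(2), where s = score_h
      and u = "\<pi> N ^ 2 * (1 - \<pi> N)" and w = "\<pi> N * (1 - \<pi> N) ^ 2"]
  show ?case by simp
qed

lemma cond_cov_conv_in_prob:
  "conv_in_prob (\<lambda>_. M) (\<lambda>N. cond_cov M F (boot_R G Z c N1 N) (boot_L score_h Z c N))
     (p\<^sup>2 * (1 - p) * (\<integral> z. (h \<bullet> gradf z) * lam_dn_lim G P z \<partial>lborel)
       - p * (1 - p)\<^sup>2 * (\<integral> z. (h \<bullet> gradf z) * lam_up_lim G P z \<partial>lborel))"
proof (rule conv_in_prob_transfer)
  let ?W = "\<lambda>N v. \<pi> N ^ 2 * (1 - \<pi> N) * lam_dn_avg G score_h N v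
    - \<pi> N * (1 - \<pi> N) ^ 2 * lam_up_avg G score_h N v"
  have sample_prob: "prob_space (sample_law P N)" for N
    unfolding sample_law_def using prob_space_P by (intro prob_space_PiM) auto
  have avg_measurable: "lam_dn_avg G score_h N \<in> borel_measurable (sample_law P N)"
    "lam_up_avg G score_h N \<in> borel_measurable (sample_law P N)" for N
    using lam_avgs_measurable[OF G_graph G_measurable score_h_measurable]
    by (simp_all add: measurable_cong_sets[OF sets_sample_law refl])
  show "sample N \<in> measurable M (sample_law P N)" for N
    using sample_measurable by (simp add: measurable_cong_sets[OF refl sets_sample_law])
  show "eventually (\<lambda>N. distr M (sample_law P N) (sample N) = sample_law P N) sequentially"
    using eventually_gt_at_top[of 0] by eventually_elim (simp add: distr_sample)
  show "cond_cov M F (boot_R G Z c N1 N) (boot_L score_h Z c N) \<in> borel_measurable M" for N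
    unfolding cond_cov_def by simp
  show "?W N \<in> borel_measurable (sample_law P N)" for N
    using avg_measurable by simp
  show "eventually (\<lambda>N. AE \<omega> in M. cond_cov M F (boot_R G Z c N1 N) (boot_L score_h Z c N) \<omega>
      = ?W N (sample N \<omega>)) sequentially"
    using cond_cov_eq_lam_avgs by simp
  have \<pi>: "\<pi> \<longlonglongrightarrow> p" using N1_lim unfolding \<pi>_def[abs_def] .
  have dn: "conv_in_prob (sample_law P) (lam_dn_avg G score_h) (\<integral> z. (h \<bullet> gradf z) * lam_dn_lim G P z \<partial>lborel)"
    and up: "conv_in_prob (sample_law P) (lam_up_avg G score_h) (\<integral> z. (h \<bullet> gradf z) * lam_up_lim G P z \<partial>lborel)"
    using C unfolding cond_C_def lam_dn_avg_def[abs_def] lam_up_avg_def[abs_def] by simp_all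
  have "conv_in_prob (sample_law P) (\<lambda>N v. \<pi> N ^ 2 * (1 - \<pi> N) * lam_dn_avg G score_h N v
      + (- (\<pi> N * (1 - \<pi> N) ^ 2)) * lam_up_avg G score_h N v)
      (p\<^sup>2 * (1 - p) * (\<integral> z. (h \<bullet> gradf z) * lam_dn_lim G P z \<partial>lborel)
        + (- (p * (1 - p)\<^sup>2)) * (\<integral> z. (h \<bullet> gradf z) * lam_up_lim G P z \<partial>lborel))"
    by (intro conv_in_prob_add conv_in_prob_mult_convergent sample_prob avg_measurable
        borel_measurable_times borel_measurable_const tendsto_intros \<pi> dn up)
  then show "conv_in_prob (sample_law P) ?W
      (p\<^sup>2 * (1 - p) * (\<integral> z. (h \<bullet> gradf z) * lam_dn_lim G P z \<partial>lborel)
        - p * (1 - p)\<^sup>2 * (\<integral> z. (h \<bullet> gradf z) * lam_up_lim G P z \<partial>lborel))"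
    by simp
qed

end

theorem propositionA1:
  fixes \<Theta> :: "'k::euclidean_space set"
    and f :: "'k \<Rightarrow> 'd::euclidean_space \<Rightarrow> real"
    and \<theta>1 :: 'k
    and gradf :: "'d \<Rightarrow> 'k"
    and h :: 'k
    and G :: "'d set \<Rightarrow> ('d \<times> 'd) set"
    and M :: "'w measure"
    and Z :: "nat \<Rightarrow> 'w \<Rightarrow> 'd"
    and c :: "nat \<Rightarrow> nat \<Rightarrow> 'w \<Rightarrow> bool"
    and N1 :: "nat \<Rightarrow> nat"
    and p :: real
  defines "P \<equiv> density lborel (\<lambda>z. ennreal (f \<theta>1 z))"
    and "\<eta> \<equiv> score f \<theta>1 gradf"
    and "F \<equiv> vimage_algebra (space M) (\<lambda>\<omega> i. Z i \<omega>) (PiM UNIV (\<lambda>_. borel :: 'd measure))"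
    and "q \<equiv> 1 - p"
    and "r \<equiv> 2 * p * (1 - p)"
  assumes \<theta>1_in: "\<theta>1 \<in> \<Theta>"
    and densities: "\<And>\<theta>. \<theta> \<in> \<Theta> \<Longrightarrow> f \<theta> \<in> borel_measurable lborel \<and> (\<forall>z. 0 \<le> f \<theta> z)
                          \<and> (\<integral>\<^sup>+ z. ennreal (f \<theta> z) \<partial>lborel) = 1"
    and grad: "AE z in lborel. ((\<lambda>\<theta>. f \<theta> z) has_derivative (\<lambda>u. u \<bullet> gradf z)) (at \<theta>1 within \<Theta>)"
    and grad_meas: "gradf \<in> borel_measurable lborel"
    and R_qmd: "qmd \<Theta> f \<theta>1 \<eta>"
    and R_moment: "(\<integral>\<^sup>+ z. ennreal (\<bar>h \<bullet> \<eta> z\<bar> ^ 4) \<partial>P) < \<infinity>"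
    and G_graph: "dir_graph_functional G"
    and G_meas: "graph_measurable G"
    and C: "cond_C G P (\<lambda>z. h \<bullet> \<eta> z) (\<lambda>z. h \<bullet> gradf z)"
    and M_prob: "prob_space M"
    and Z_distr: "\<And>i. distributed M lborel (Z i) (\<lambda>z. ennreal (f \<theta>1 z))"
    and Z_indep: "prob_space.indep_vars M (\<lambda>_. borel) Z UNIV"
    and c_indep: "\<And>N. prob_space.indep_vars M (\<lambda>_. count_space UNIV) (c N) {..<N}"
    and c_prob: "\<And>N i. i < N \<Longrightarrow> measure M {\<omega> \<in> space M. c N i \<omega>} = real (N1 N) / real N"
    and c_Z_indep: "\<And>N. prob_space.indep_set M (sets F)
                       {(\<lambda>\<omega>. restrict (\<lambda>i. c N i \<omega>) {..<N}) -` A \<inter> space M | A.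
                          A \<in> sets (PiM {..<N} (\<lambda>_. count_space UNIV))}"
    and N1_le: "\<And>N. N1 N \<le> N"
    and N1_lim: "(\<lambda>N. real (N1 N) / real N) \<longlonglongrightarrow> p"
    and p_pos: "0 < p" and p_lt1: "p < 1"
  shows "conv_in_prob (\<lambda>_. M)
           (\<lambda>N. cond_cov M F (boot_R G Z c N1 N) (boot_L (\<lambda>z. h \<bullet> \<eta> z) Z c N))
           ((r / 2) * (p * (\<integral> z. (h \<bullet> gradf z) * lam_dn_lim G P z \<partial>lborel)
                     - q * (\<integral> z. (h \<bullet> gradf z) * lam_up_lim G P z \<partial>lborel)))"
proof -
  interpret bootstrap_sample f \<theta>1 gradf h G M Z c N1 p P \<eta> F
    by (rule bootstrap_sample.intro)
      (use densities[OF \<theta>1_in] grad_meas R_moment G_graph G_meas C M_prob Z_distr Z_indep c_indep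
        c_prob c_Z_indep N1_lim in \<open>simp_all add: P_def \<eta>_def F_def\<close>)
  have "(r / 2) * (p * (\<integral> z. (h \<bullet> gradf z) * lam_dn_lim G P z \<partial>lborel)
                - q * (\<integral> z. (h \<bullet> gradf z) * lam_up_lim G P z \<partial>lborel))
      = p\<^sup>2 * (1 - p) * (\<integral> z. (h \<bullet> gradf z) * lam_dn_lim G P z \<partial>lborel)
        - p * (1 - p)\<^sup>2 * (\<integral> z. (h \<bullet> gradf z) * lam_up_lim G P z \<partial>lborel)"
  proof -
    have rq: "r / 2 = p * q" by (simp add: r_def q_def)
    show ?thesis unfolding rq q_def by (simp add: power2_eq_square algebra_simps)
  qed
  then show ?thesis using cond_cov_conv_in_prob by (simp only:)
qed

end
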